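(* Let $\Gamma$ be a $\mathbb{Z}^d$-periodic graph with fundamental domain $W$. If an operator on $\Gamma$ has finitely many critical points, then its critical point degree is at least $2^d|W|$.
   Context: A $\mathbb{Z}^d$-periodic graph $\Gamma$ is a simple undirected graph with bounded vertex degrees together with a free action of $\mathbb{Z}^d$ by graph automorphisms, written $(\alpha,v)\mapsto \alpha+v$, having finitely many orbits on vertices and on edges. Write $u\sim v$ if $\{u,v\}$ is an edge. A fundamental domain $W$ is a set of vertices containing exactly one vertex of each $\mathbb{Z}^d$-orbit. An operator on $\Gamma$ is given by $\mathbb{Z}^d$-periodic real-valued functions $e$ on edges (edge weights, $e_{(u,v)}=e_{(v,u)}$) and $V$ on vertices (potential). For $z\in(\mathbb{C}^\times)^d$ and $\alpha\in\mathbb{Z}^d$ put $z^\alpha=z_1^{\alpha_1}\cdots z_d^{\alpha_d}$. The Floquet matrix $H(z)$ is the $W\times W$ matrix whose $(v,u)$ entry is $\delta_{v,u}V(v)-\sum_{\alpha\in\mathbb{Z}^d:\ v\sim \alpha+u} e_{(v,\alpha+u)}z^\alpha$. The dispersion polynomial is $\Phi(z,\lambda)=\det(\lambda I_W-H(z))$. A critical point of the operator is a solution $(z,\lambda)\in(\mathbb{C}^\times)^d\times\mathbb{C}$ of the system (the critical point equations) $\Phi=z_1\frac{\partial\Phi}{\partial z_1}=\cdots=z_d\frac{\partial \Phi}{\partial z_d}=0$. The critical point degree of the operator is the number of critical points counted with multiplicity (as points of the zero-dimensional solution scheme), and is defined to be $0$ if there are infinitely many critical points. *)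

theory Defs
  imports Complex_Main "HOL-Library.Poly_Mapping" "HOL-Combinatorics.Permutations"
begin

text \<open>Laurent polynomials with complex coefficients: finitely supported maps from
  integer exponent vectors (variables indexed by nat) to coefficients.
  Variables 0..d-1 are z_1..z_d, variable d is lambda.\<close>
type_synonym lpoly = "(nat \<Rightarrow>\<^sub>0 int) \<Rightarrow>\<^sub>0 complex"

definition lattice :: "nat \<Rightarrow> (nat \<Rightarrow>\<^sub>0 int) set" where
  "lattice d = {\<alpha>. Poly_Mapping.keys \<alpha> \<subseteq> {..<d}}"

definition orbit :: "nat \<Rightarrow> ((nat \<Rightarrow>\<^sub>0 int) \<Rightarrow> 'v \<Rightarrow> 'v) \<Rightarrow> 'v \<Rightarrow> 'v set" where
  "orbit d act v = {act \<alpha> v | \<alpha>. \<alpha> \<in> lattice d}"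

definition periodic_graph ::
  "nat \<Rightarrow> ((nat \<Rightarrow>\<^sub>0 int) \<Rightarrow> 'v \<Rightarrow> 'v) \<Rightarrow> ('v \<Rightarrow> 'v \<Rightarrow> bool) \<Rightarrow> bool" where
  "periodic_graph d act adj \<longleftrightarrow>
     (\<forall>u v. adj u v \<longrightarrow> adj v u) \<and> (\<forall>v. \<not> adj v v) \<and>
     (\<exists>B::nat. \<forall>v. finite {u. adj v u} \<and> card {u. adj v u} \<le> B) \<and>
     (\<forall>v. act 0 v = v) \<and>
     (\<forall>\<alpha>\<in>lattice d. \<forall>\<beta>\<in>lattice d. \<forall>v. act (\<alpha> + \<beta>) v = act \<alpha> (act \<beta> v)) \<and>
     (\<forall>\<alpha>\<in>lattice d. \<forall>v. act \<alpha> v = v \<longrightarrow> \<alpha> = 0) \<and>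
     (\<forall>\<alpha>\<in>lattice d. \<forall>u v. adj (act \<alpha> u) (act \<alpha> v) = adj u v) \<and>
     finite (orbit d act ` UNIV) \<and>
     finite ((\<lambda>E. {act \<alpha> ` E | \<alpha>. \<alpha> \<in> lattice d}) ` {{u, v} | u v. adj u v})"

definition fundamental_domain ::
  "nat \<Rightarrow> ((nat \<Rightarrow>\<^sub>0 int) \<Rightarrow> 'v \<Rightarrow> 'v) \<Rightarrow> 'v set \<Rightarrow> bool" where
  "fundamental_domain d act W \<longleftrightarrow> (\<forall>v. \<exists>!w. w \<in> W \<and> w \<in> orbit d act v)"

definition periodic_operator ::
  "nat \<Rightarrow> ((nat \<Rightarrow>\<^sub>0 int) \<Rightarrow> 'v \<Rightarrow> 'v) \<Rightarrow> ('v \<Rightarrow> 'v \<Rightarrow> real) \<Rightarrow> ('v \<Rightarrow> real) \<Rightarrow> bool" where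
  "periodic_operator d act e V \<longleftrightarrow>
     (\<forall>u v. e u v = e v u) \<and>
     (\<forall>\<alpha>\<in>lattice d. \<forall>u v. e (act \<alpha> u) (act \<alpha> v) = e u v) \<and>
     (\<forall>\<alpha>\<in>lattice d. \<forall>v. V (act \<alpha> v) = V v)"

definition lconst :: "complex \<Rightarrow> lpoly" where
  "lconst c = Poly_Mapping.single 0 c"

definition lvar :: "nat \<Rightarrow> lpoly" where
  "lvar i = Poly_Mapping.single (Poly_Mapping.single i 1) 1"

definition det_on :: "'v set \<Rightarrow> ('v \<Rightarrow> 'v \<Rightarrow> 'a::comm_ring_1) \<Rightarrow> 'a" where
  "det_on W M = (\<Sum>p\<in>{p. p permutes W}. of_int (sign p) * (\<Prod>v\<in>W. M v (p v)))"

text \<open>Floquet matrix entry (v,u); the monomial z^alpha is the exponent vector alpha.\<close>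
definition floquet ::
  "nat \<Rightarrow> ((nat \<Rightarrow>\<^sub>0 int) \<Rightarrow> 'v \<Rightarrow> 'v) \<Rightarrow> ('v \<Rightarrow> 'v \<Rightarrow> bool) \<Rightarrow> ('v \<Rightarrow> 'v \<Rightarrow> real)
     \<Rightarrow> ('v \<Rightarrow> real) \<Rightarrow> 'v \<Rightarrow> 'v \<Rightarrow> lpoly" where
  "floquet d act adj e V v u =
     (if v = u then lconst (complex_of_real (V v)) else 0)
     - (\<Sum>\<alpha>\<in>{\<alpha>\<in>lattice d. adj v (act \<alpha> u)}.
           Poly_Mapping.single \<alpha> (complex_of_real (e v (act \<alpha> u))))"

definition dispersion ::
  "nat \<Rightarrow> ((nat \<Rightarrow>\<^sub>0 int) \<Rightarrow> 'v \<Rightarrow> 'v) \<Rightarrow> ('v \<Rightarrow> 'v \<Rightarrow> bool) \<Rightarrow> ('v \<Rightarrow> 'v \<Rightarrow> real)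
     \<Rightarrow> ('v \<Rightarrow> real) \<Rightarrow> 'v set \<Rightarrow> lpoly" where
  "dispersion d act adj e V W =
     det_on W (\<lambda>v u. (if v = u then lvar d else 0) - floquet d act adj e V v u)"

text \<open>The operator z_i d/dz_i (variable index i) on Laurent polynomials.\<close>
definition zdz :: "nat \<Rightarrow> lpoly \<Rightarrow> lpoly" where
  "zdz i p = (\<Sum>\<alpha>\<in>Poly_Mapping.keys p. Poly_Mapping.single \<alpha> (of_int (Poly_Mapping.lookup \<alpha> i) * Poly_Mapping.lookup p \<alpha>))"

definition leval :: "(nat \<Rightarrow> complex) \<Rightarrow> lpoly \<Rightarrow> complex" where
  "leval x p = (\<Sum>\<alpha>\<in>Poly_Mapping.keys p. Poly_Mapping.lookup p \<alpha> * (\<Prod>i\<in>Poly_Mapping.keys \<alpha>. x i powi Poly_Mapping.lookup \<alpha> i))"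

text \<open>Critical point equations: generator 0 is Phi, generator (Suc i) is z_(i+1) dPhi/dz_(i+1).\<close>
definition crit_gens :: "nat \<Rightarrow> lpoly \<Rightarrow> nat \<Rightarrow> lpoly" where
  "crit_gens d \<Phi> j = (if j = 0 then \<Phi> else zdz (j - 1) \<Phi>)"

text \<open>Points of (C^x)^d x C, encoded as x :: nat => complex with x 0..x (d-1) the z's,
  x d = lambda, and all other coordinates 0.\<close>
definition crit_points :: "nat \<Rightarrow> lpoly \<Rightarrow> (nat \<Rightarrow> complex) set" where
  "crit_points d \<Phi> = {x. (\<forall>i<d. x i \<noteq> 0) \<and> (\<forall>i>d. x i = 0) \<and>
                          (\<forall>j\<le>d. leval x (crit_gens d \<Phi> j) = 0)}"

text \<open>The coordinate ring C[z_1^(+-1),...,z_d^(+-1),lambda] of (C^x)^d x C.\<close>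
definition ring_d :: "nat \<Rightarrow> lpoly set" where
  "ring_d d = {p. \<forall>\<alpha>\<in>Poly_Mapping.keys p. Poly_Mapping.keys \<alpha> \<subseteq> {..d} \<and> 0 \<le> Poly_Mapping.lookup \<alpha> d}"

text \<open>Number of critical points counted with multiplicity = length of the zero-dimensional
  solution scheme = complex dimension of ring_d / (critical ideal), i.e. the least size
  of a set spanning the quotient; 0 if there are infinitely many critical points.\<close>
definition crit_degree :: "nat \<Rightarrow> lpoly \<Rightarrow> nat" where
  "crit_degree d \<Phi> =
     (if finite (crit_points d \<Phi>) then
        (LEAST n. \<exists>b::nat \<Rightarrow> lpoly. (\<forall>k<n. b k \<in> ring_d d) \<and>
           (\<forall>f\<in>ring_d d. \<exists>(c::nat \<Rightarrow> complex) (g::nat \<Rightarrow> lpoly).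
              (\<forall>j\<le>d. g j \<in> ring_d d) \<and>
              f = (\<Sum>k<n. lconst (c k) * b k) + (\<Sum>j\<le>d. g j * crit_gens d \<Phi> j)))
      else 0)"

end

(*
  Since the edge weights are real and symmetric, H(1/z) is the transpose of H(z), so the
  dispersion polynomial is invariant under z -> 1/z and each z_i dPhi/dz_i changes sign under
  it. At the 2^d sign vectors s in {-1,1}^d, the fixed points of z -> 1/z, all equations but
  Phi = 0 therefore hold identically, and Phi(s, lambda) is a characteristic polynomial of
  degree |W|. Taking f to the remainders of f(s, lambda) modulo Phi(s, lambda) for all s is thus
  a linear map from the coordinate ring onto a space of dimension 2^d |W| that kills the
  critical ideal, which bounds the dimension of the quotient from below.
  The degree is the least size of a spanning family of the quotient, so one also needs the
  quotient to be finite-dimensional. This follows from the finiteness of the critical set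
  through a weak Nullstellensatz, proved with the uncountability of the complex numbers.
*)
theory Submission
  imports Defs "HOL-Library.Countable_Set" "HOL-Library.Function_Algebras"
    "HOL-Analysis.Continuum_Not_Denumerable" "HOL-Computational_Algebra.Fundamental_Theorem_Algebra"
begin

section \<open>Laurent polynomials and the coordinate ring\<close>

lemma lookup_lconst_mult [simp]:
  "Poly_Mapping.lookup (lconst c * p) \<alpha> = c * Poly_Mapping.lookup p \<alpha>"
  unfolding lconst_def mult_map_scale_conv_mult[symmetric]
  by (simp add: Poly_Mapping.map.rep_eq when_def)

lemma lconst_0 [simp]: "lconst 0 = 0"
  by (simp add: lconst_def)

lemma lconst_1 [simp]: "lconst 1 = 1"
  by (simp add: lconst_def)

lemma lconst_add: "lconst (a + b) = lconst a + lconst b"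
  by (simp add: lconst_def single_add)

lemma lconst_mult: "lconst (a * b) = lconst a * lconst b"
  by (simp add: lconst_def mult_single)

lemma lconst_uminus: "lconst (- a) = - lconst a"
  by (simp add: lconst_def single_uminus)

lemma lconst_eq_0_iff [simp]: "lconst a = 0 \<longleftrightarrow> a = 0"
  by (metis lconst_def lookup_single_eq single_zero)

lemma lconst_sum: "lconst (\<Sum>i\<in>A. f i) = (\<Sum>i\<in>A. lconst (f i))"
  by (induction A rule: infinite_finite_induct) (auto simp: lconst_add)

lemma lconst_power: "lconst (a ^ n) = lconst a ^ n"
  by (induction n) (auto simp: lconst_mult)

lemma single_eq_lconst_mult: "Poly_Mapping.single \<alpha> c = lconst c * Poly_Mapping.single \<alpha> (1::complex)"
  by (simp add: lconst_def mult_single)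

lemma lpoly_expansion:
  "p = (\<Sum>\<alpha>\<in>Poly_Mapping.keys p. Poly_Mapping.single \<alpha> (Poly_Mapping.lookup p \<alpha>))"
proof (rule poly_mapping_eqI)
  fix \<beta>
  show "Poly_Mapping.lookup p \<beta> = Poly_Mapping.lookup
     (\<Sum>\<alpha>\<in>Poly_Mapping.keys p. Poly_Mapping.single \<alpha> (Poly_Mapping.lookup p \<alpha>)) \<beta>"
    by (simp add: lookup_sum lookup_single when_def in_keys_iff)
qed

lemma lpoly_monomial_expansion:
  "p = (\<Sum>\<alpha>\<in>Poly_Mapping.keys p. lconst (Poly_Mapping.lookup p \<alpha>) * Poly_Mapping.single \<alpha> 1)"
  by (subst lpoly_expansion) (simp add: single_eq_lconst_mult[symmetric])

lemma update_eq_single_plus: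
  assumes "a \<notin> Poly_Mapping.keys f"
  shows "Poly_Mapping.update a b f = Poly_Mapping.single a b + f"
  using assms
  by (intro poly_mapping_eqI) (auto simp: lookup_update lookup_add lookup_single when_def in_keys_iff)

lemma keys_update_nonzero:
  assumes "a \<notin> Poly_Mapping.keys f" "b \<noteq> 0"
  shows "Poly_Mapping.keys (Poly_Mapping.update a b f) = insert a (Poly_Mapping.keys f)"
  using assms by (auto simp: keys_update)

lemma finite_poly_mappings_bounded:
  assumes "finite D" "\<And>i. finite (T i)"
  shows "finite {\<alpha>::nat \<Rightarrow>\<^sub>0 int. Poly_Mapping.keys \<alpha> \<subseteq> D \<and> (\<forall>i. Poly_Mapping.lookup \<alpha> i \<in> T i)}"
    (is "finite ?S")
proof -
  let ?f = "\<lambda>\<alpha>. restrict (Poly_Mapping.lookup \<alpha>) D"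
  have "inj_on ?f ?S"
  proof (rule inj_onI, rule poly_mapping_eqI)
    fix \<alpha> \<beta> i assume \<alpha>\<beta>: "\<alpha> \<in> ?S" "\<beta> \<in> ?S" "?f \<alpha> = ?f \<beta>"
    show "Poly_Mapping.lookup \<alpha> i = Poly_Mapping.lookup \<beta> i"
    proof (cases "i \<in> D")
      case True then show ?thesis using \<alpha>\<beta>(3) by (metis restrict_apply')
    next
      case False
      then have "i \<notin> Poly_Mapping.keys \<alpha>" "i \<notin> Poly_Mapping.keys \<beta>" using \<alpha>\<beta>(1,2) by auto
      then show ?thesis by (simp add: in_keys_iff)
    qed
  qed
  moreover have "?f ` ?S \<subseteq> PiE D T" by auto
  moreover have "finite (PiE D T)" using assms by (intro finite_PiE) auto
  ultimately show ?thesis by (meson finite_imageD finite_subset)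
qed

definition ring_d_exp :: "nat \<Rightarrow> (nat \<Rightarrow>\<^sub>0 int) \<Rightarrow> bool" where
  "ring_d_exp d \<alpha> \<longleftrightarrow> Poly_Mapping.keys \<alpha> \<subseteq> {..d} \<and> 0 \<le> Poly_Mapping.lookup \<alpha> d"

lemma ring_d_iff: "p \<in> ring_d d \<longleftrightarrow> (\<forall>\<alpha>\<in>Poly_Mapping.keys p. ring_d_exp d \<alpha>)"
  by (simp add: ring_d_def ring_d_exp_def)

lemma ring_d_exp_0 [simp]: "ring_d_exp d 0"
  by (simp add: ring_d_exp_def)

lemma ring_d_exp_add: "ring_d_exp d \<alpha> \<Longrightarrow> ring_d_exp d \<beta> \<Longrightarrow> ring_d_exp d (\<alpha> + \<beta>)"
  unfolding ring_d_exp_def using keys_add[of \<alpha> \<beta>] by (auto simp: lookup_add)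

lemma ring_d_exp_single: "i \<le> d \<Longrightarrow> (i = d \<Longrightarrow> 0 \<le> t) \<Longrightarrow> ring_d_exp d (Poly_Mapping.single i t)"
  by (auto simp: ring_d_exp_def lookup_single when_def)

lemma ring_d_0 [simp]: "0 \<in> ring_d d"
  by (simp add: ring_d_iff)

lemma ring_d_single: "ring_d_exp d \<alpha> \<Longrightarrow> Poly_Mapping.single \<alpha> c \<in> ring_d d"
  by (simp add: ring_d_iff)

lemma ring_d_lconst [simp]: "lconst c \<in> ring_d d"
  unfolding lconst_def by (rule ring_d_single) simp

lemma ring_d_1 [simp]: "1 \<in> ring_d d"
  using ring_d_lconst[of 1 d] by simp

lemma ring_d_of_int [simp]: "of_int c \<in> ring_d d"
  using ring_d_lconst[of "of_int c" d] unfolding lconst_def by (simp add: single_of_int)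

lemma ring_d_add: "p \<in> ring_d d \<Longrightarrow> q \<in> ring_d d \<Longrightarrow> p + q \<in> ring_d d"
  unfolding ring_d_iff using keys_add[of p q] by blast

lemma ring_d_uminus: "p \<in> ring_d d \<Longrightarrow> - p \<in> ring_d d"
  unfolding ring_d_iff by simp

lemma ring_d_diff: "p \<in> ring_d d \<Longrightarrow> q \<in> ring_d d \<Longrightarrow> p - q \<in> ring_d d"
  using ring_d_add[of p d "- q"] ring_d_uminus[of q d] by simp

lemma ring_d_mult: "p \<in> ring_d d \<Longrightarrow> q \<in> ring_d d \<Longrightarrow> p * q \<in> ring_d d"
  unfolding ring_d_iff using keys_mult[of p q] by (fastforce intro: ring_d_exp_add)

lemma ring_d_sum: "(\<And>i. i \<in> A \<Longrightarrow> f i \<in> ring_d d) \<Longrightarrow> (\<Sum>i\<in>A. f i) \<in> ring_d d"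
  by (induction A rule: infinite_finite_induct) (auto intro: ring_d_add)

lemma ring_d_prod: "(\<And>i. i \<in> A \<Longrightarrow> f i \<in> ring_d d) \<Longrightarrow> (\<Prod>i\<in>A. f i) \<in> ring_d d"
  by (induction A rule: infinite_finite_induct) (auto intro: ring_d_mult)

lemma ring_d_power: "p \<in> ring_d d \<Longrightarrow> p ^ n \<in> ring_d d"
  by (induction n) (auto intro: ring_d_mult)

lemma ring_d_lvar: "k \<le> d \<Longrightarrow> lvar k \<in> ring_d d"
  unfolding lvar_def by (intro ring_d_single ring_d_exp_single) auto

definition lvar_inv :: "nat \<Rightarrow> lpoly" where
  "lvar_inv k = Poly_Mapping.single (Poly_Mapping.single k (-1)) 1"

lemma ring_d_lvar_inv: "k < d \<Longrightarrow> lvar_inv k \<in> ring_d d"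
  unfolding lvar_inv_def by (intro ring_d_single ring_d_exp_single) auto

lemma lvar_mult_lvar_inv: "lvar k * lvar_inv k = 1"
proof -
  have "Poly_Mapping.single k (1::int) + Poly_Mapping.single k (-1) = 0"
    by (simp add: single_add[symmetric])
  then show ?thesis by (simp add: lvar_def lvar_inv_def mult_single)
qed

lemma single_var_power: "Poly_Mapping.single (Poly_Mapping.single i (int n)) (1::complex) = lvar i ^ n"
proof (induction n)
  case (Suc n)
  have "Poly_Mapping.single i (int (Suc n)) = Poly_Mapping.single i 1 + Poly_Mapping.single i (int n)"
    by (simp add: single_add[symmetric] add.commute)
  then have "Poly_Mapping.single (Poly_Mapping.single i (int (Suc n))) (1::complex)
     = lvar i * Poly_Mapping.single (Poly_Mapping.single i (int n)) 1"
    by (simp add: lvar_def mult_single)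
  then show ?case using Suc by simp
qed simp

lemma single_var_power_neg:
  "Poly_Mapping.single (Poly_Mapping.single i (- int n)) (1::complex) = lvar_inv i ^ n"
proof (induction n)
  case (Suc n)
  have "Poly_Mapping.single i (- int (Suc n)) = Poly_Mapping.single i (-1) + Poly_Mapping.single i (- int n)"
    by (simp add: single_add[symmetric] add.commute)
  then have "Poly_Mapping.single (Poly_Mapping.single i (- int (Suc n))) (1::complex)
     = lvar_inv i * Poly_Mapping.single (Poly_Mapping.single i (- int n)) 1"
    by (simp add: lvar_inv_def mult_single)
  then show ?case using Suc by simp
qed simp

section \<open>Ideals of the coordinate ring\<close>

definition ring_d_ideal :: "nat \<Rightarrow> lpoly set \<Rightarrow> bool" where
  "ring_d_ideal d K \<longleftrightarrow> K \<subseteq> ring_d d \<and> 0 \<in> K \<and> (\<forall>x\<in>K. \<forall>y\<in>K. x + y \<in> K) \<and>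
     (\<forall>r\<in>ring_d d. \<forall>x\<in>K. r * x \<in> K)"

context
  fixes d K assumes K: "ring_d_ideal d K"
begin

lemma ideal_subset: "x \<in> K \<Longrightarrow> x \<in> ring_d d"
  using K unfolding ring_d_ideal_def by blast

lemma ideal_0: "0 \<in> K"
  using K unfolding ring_d_ideal_def by blast

lemma ideal_add: "x \<in> K \<Longrightarrow> y \<in> K \<Longrightarrow> x + y \<in> K"
  using K unfolding ring_d_ideal_def by blast

lemma ideal_mult_left: "r \<in> ring_d d \<Longrightarrow> x \<in> K \<Longrightarrow> r * x \<in> K"
  using K unfolding ring_d_ideal_def by blast

lemma ideal_mult_right: "r \<in> ring_d d \<Longrightarrow> x \<in> K \<Longrightarrow> x * r \<in> K"
  using ideal_mult_left by (simp add: mult.commute)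

lemma ideal_lconst_mult: "x \<in> K \<Longrightarrow> lconst c * x \<in> K"
  by (simp add: ideal_mult_left)

lemma ideal_uminus: "x \<in> K \<Longrightarrow> - x \<in> K"
  using ideal_lconst_mult[of x "-1"] by (simp add: lconst_uminus)

lemma ideal_diff: "x \<in> K \<Longrightarrow> y \<in> K \<Longrightarrow> x - y \<in> K"
  using ideal_add[of x "- y"] ideal_uminus[of y] by simp

lemma ideal_sum: "(\<And>i. i \<in> A \<Longrightarrow> f i \<in> K) \<Longrightarrow> (\<Sum>i\<in>A. f i) \<in> K"
  by (induction A rule: infinite_finite_induct) (auto intro: ideal_add ideal_0)

lemma ideal_lconst_imp_one: "lconst c \<in> K \<Longrightarrow> c \<noteq> 0 \<Longrightarrow> 1 \<in> K"
  using ideal_lconst_mult[of "lconst c" "inverse c"] by (simp add: lconst_mult[symmetric])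

lemma ideal_cong_trans: "a - b \<in> K \<Longrightarrow> b - c \<in> K \<Longrightarrow> a - c \<in> K"
  using ideal_add[of "a - b" "b - c"] by simp

lemma ideal_cong_mult:
  assumes "a - a' \<in> K" "b - b' \<in> K" "a \<in> ring_d d" "b' \<in> ring_d d"
  shows "a * b - a' * b' \<in> K"
proof -
  have "a * b - a' * b' = a * (b - b') + (a - a') * b'" by (simp add: algebra_simps)
  then show ?thesis using assms by (auto intro: ideal_add ideal_mult_left ideal_mult_right)
qed

lemma ideal_cong_power:
  assumes "a - b \<in> K" "a \<in> ring_d d" "b \<in> ring_d d"
  shows "a ^ n - b ^ n \<in> K"
proof (induction n)
  case (Suc n)
  show ?case using ideal_cong_mult[OF assms(1) Suc assms(2) ring_d_power[OF assms(3)]] by simp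
qed (simp add: ideal_0)

end

definition crit_ideal :: "nat \<Rightarrow> lpoly \<Rightarrow> lpoly set" where
  "crit_ideal d \<Phi> = {(\<Sum>j\<le>d. g j * crit_gens d \<Phi> j) | g. \<forall>j\<le>d. g j \<in> ring_d d}"

lemma ring_d_ideal_crit_ideal:
  assumes "\<forall>j\<le>d. crit_gens d \<Phi> j \<in> ring_d d"
  shows "ring_d_ideal d (crit_ideal d \<Phi>)"
  unfolding ring_d_ideal_def
proof (intro conjI ballI subsetI)
  fix x assume "x \<in> crit_ideal d \<Phi>"
  then show "x \<in> ring_d d" using assms unfolding crit_ideal_def
    by (auto intro!: ring_d_sum ring_d_mult)
next
  show "0 \<in> crit_ideal d \<Phi>" unfolding crit_ideal_def
    by (rule CollectI, rule exI[of _ "\<lambda>_. 0"]) simp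
next
  fix x y assume "x \<in> crit_ideal d \<Phi>" "y \<in> crit_ideal d \<Phi>"
  then obtain g h where "\<forall>j\<le>d. g j \<in> ring_d d" "\<forall>j\<le>d. h j \<in> ring_d d"
    "x = (\<Sum>j\<le>d. g j * crit_gens d \<Phi> j)" "y = (\<Sum>j\<le>d. h j * crit_gens d \<Phi> j)"
    unfolding crit_ideal_def by blast
  then show "x + y \<in> crit_ideal d \<Phi>" unfolding crit_ideal_def
    by (intro CollectI exI[of _ "\<lambda>j. g j + h j"]) (auto simp: sum.distrib algebra_simps intro: ring_d_add)
next
  fix r x assume "r \<in> ring_d d" "x \<in> crit_ideal d \<Phi>"
  then obtain g where "\<forall>j\<le>d. g j \<in> ring_d d" "x = (\<Sum>j\<le>d. g j * crit_gens d \<Phi> j)"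
    unfolding crit_ideal_def by blast
  then show "r * x \<in> crit_ideal d \<Phi>" using \<open>r \<in> ring_d d\<close> unfolding crit_ideal_def
    by (intro CollectI exI[of _ "\<lambda>j. r * g j"]) (auto simp: sum_distrib_left algebra_simps intro: ring_d_mult)
qed

lemma crit_gens_in_crit_ideal:
  assumes "j \<le> d"
  shows "crit_gens d \<Phi> j \<in> crit_ideal d \<Phi>"
proof -
  have "(\<Sum>j'\<le>d. (if j' = j then 1 else 0) * crit_gens d \<Phi> j')
      = (\<Sum>j'\<le>d. if j' = j then crit_gens d \<Phi> j' else 0)"
    by (intro sum.cong) auto
  also have "\<dots> = crit_gens d \<Phi> j" using assms by simp
  finally have "(\<Sum>j'\<le>d. (if j' = j then 1 else 0) * crit_gens d \<Phi> j') = crit_gens d \<Phi> j" .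
  then show ?thesis unfolding crit_ideal_def
    by (intro CollectI exI[of _ "\<lambda>j'. if j' = j then 1 else 0"]) auto
qed

definition ideal_adjoin :: "nat \<Rightarrow> lpoly set \<Rightarrow> lpoly \<Rightarrow> lpoly set" where
  "ideal_adjoin d K f = {x + h * f | x h. x \<in> K \<and> h \<in> ring_d d}"

lemma
  assumes K: "ring_d_ideal d K" and f: "f \<in> ring_d d"
  shows ring_d_ideal_adjoin: "ring_d_ideal d (ideal_adjoin d K f)"
    and subset_ideal_adjoin: "K \<subseteq> ideal_adjoin d K f"
    and in_ideal_adjoin: "f \<in> ideal_adjoin d K f"
proof -
  show "ring_d_ideal d (ideal_adjoin d K f)"
    unfolding ring_d_ideal_def
  proof (intro conjI ballI subsetI)
    fix x assume "x \<in> ideal_adjoin d K f"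
    then show "x \<in> ring_d d" unfolding ideal_adjoin_def
      using f ideal_subset[OF K] by (auto intro!: ring_d_add ring_d_mult)
  next
    show "0 \<in> ideal_adjoin d K f" unfolding ideal_adjoin_def
      using ideal_0[OF K] by (intro CollectI exI[of _ 0]) auto
  next
    fix x y assume "x \<in> ideal_adjoin d K f" "y \<in> ideal_adjoin d K f"
    then obtain x1 h1 x2 h2 where "x = x1 + h1 * f" "y = x2 + h2 * f" "x1 \<in> K" "x2 \<in> K"
      "h1 \<in> ring_d d" "h2 \<in> ring_d d" unfolding ideal_adjoin_def by blast
    then show "x + y \<in> ideal_adjoin d K f" unfolding ideal_adjoin_def
      by (intro CollectI exI[of _ "x1 + x2"] exI[of _ "h1 + h2"])
        (auto simp: algebra_simps intro: ideal_add[OF K] ring_d_add)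
  next
    fix r x assume "r \<in> ring_d d" "x \<in> ideal_adjoin d K f"
    then obtain x1 h1 where "x = x1 + h1 * f" "x1 \<in> K" "h1 \<in> ring_d d"
      unfolding ideal_adjoin_def by blast
    then show "r * x \<in> ideal_adjoin d K f" using \<open>r \<in> ring_d d\<close> unfolding ideal_adjoin_def
      by (intro CollectI exI[of _ "r * x1"] exI[of _ "r * h1"])
        (auto simp: algebra_simps intro: ideal_mult_left[OF K] ring_d_mult)
  qed
  show "K \<subseteq> ideal_adjoin d K f"
    unfolding ideal_adjoin_def by (force intro: exI[of _ 0])
  show "f \<in> ideal_adjoin d K f" unfolding ideal_adjoin_def
    using ideal_0[OF K] by (intro CollectI exI[of _ 0] exI[of _ 1]) auto
qed

lemma one_in_ideal_adjoin_imp: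
  assumes K: "ring_d_ideal d K" and "1 \<in> ideal_adjoin d K f"
  shows "\<exists>h\<in>ring_d d. h * f - 1 \<in> K"
proof -
  obtain x h where "1 = x + h * f" "x \<in> K" "h \<in> ring_d d"
    using assms(2) unfolding ideal_adjoin_def by blast
  then have "h * f - 1 = - x" by (simp add: algebra_simps)
  then show ?thesis using \<open>x \<in> K\<close> \<open>h \<in> ring_d d\<close> ideal_uminus[OF K] by metis
qed

definition lpoly_of_poly :: "nat \<Rightarrow> complex poly \<Rightarrow> lpoly" where
  "lpoly_of_poly k p = poly (map_poly lconst p) (lvar k)"

lemma lpoly_of_poly_0 [simp]: "lpoly_of_poly k 0 = 0"
  by (simp add: lpoly_of_poly_def)

lemma lpoly_of_poly_pCons: "lpoly_of_poly k (pCons a p) = lconst a + lvar k * lpoly_of_poly k p"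
  by (simp add: lpoly_of_poly_def map_poly_pCons)

lemma lpoly_of_poly_add: "lpoly_of_poly k (p + q) = lpoly_of_poly k p + lpoly_of_poly k q"
proof -
  have "map_poly lconst (p + q) = map_poly lconst p + map_poly lconst q"
    by (intro poly_eqI) (simp add: coeff_map_poly lconst_add)
  then show ?thesis by (simp add: lpoly_of_poly_def)
qed

lemma lpoly_of_poly_smult: "lpoly_of_poly k (smult a q) = lconst a * lpoly_of_poly k q"
proof -
  have "map_poly lconst (smult a q) = smult (lconst a) (map_poly lconst q)"
    by (intro poly_eqI) (simp add: coeff_map_poly lconst_mult)
  then show ?thesis by (simp add: lpoly_of_poly_def)
qed

lemma lpoly_of_poly_mult: "lpoly_of_poly k (p * q) = lpoly_of_poly k p * lpoly_of_poly k q"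
  by (induction p)
    (simp_all add: lpoly_of_poly_pCons lpoly_of_poly_add lpoly_of_poly_smult algebra_simps)

lemma lpoly_of_poly_1 [simp]: "lpoly_of_poly k 1 = 1"
  by (simp add: lpoly_of_poly_def one_pCons map_poly_pCons)

lemma lpoly_of_poly_power: "lpoly_of_poly k (p ^ n) = lpoly_of_poly k p ^ n"
  by (induction n) (auto simp: lpoly_of_poly_mult)

lemma lpoly_of_poly_sum: "lpoly_of_poly k (\<Sum>i\<in>A. f i) = (\<Sum>i\<in>A. lpoly_of_poly k (f i))"
  by (induction A rule: infinite_finite_induct) (auto simp: lpoly_of_poly_add)

lemma lpoly_of_poly_linear: "lpoly_of_poly k [:a, 1:] = lconst a + lvar k"
  by (simp add: lpoly_of_poly_pCons)

lemma lpoly_of_poly_linear_root: "lpoly_of_poly k [:- a, 1:] = lvar k - lconst a"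
  by (simp add: lpoly_of_poly_linear lconst_uminus)

lemma ring_d_lpoly_of_poly: "k \<le> d \<Longrightarrow> lpoly_of_poly k p \<in> ring_d d"
  by (induction p) (auto simp: lpoly_of_poly_pCons intro!: ring_d_add ring_d_mult ring_d_lvar)

lemma lpoly_of_poly_expansion:
  "lpoly_of_poly k r = (\<Sum>j\<le>degree r. Poly_Mapping.single (Poly_Mapping.single k (int j)) (coeff r j))"
proof -
  have "degree (map_poly lconst r) = degree r" by (rule degree_map_poly) simp
  then have "lpoly_of_poly k r = (\<Sum>j\<le>degree r. lconst (coeff r j) * lvar k ^ j)"
    unfolding lpoly_of_poly_def poly_altdef by (simp add: coeff_map_poly)
  also have "\<dots> = (\<Sum>j\<le>degree r. Poly_Mapping.single (Poly_Mapping.single k (int j)) (coeff r j))"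
    by (intro sum.cong refl) (simp add: single_var_power[symmetric] lconst_def mult_single)
  finally show ?thesis .
qed

lemma keys_lpoly_of_poly:
  "Poly_Mapping.keys (lpoly_of_poly k r) \<subseteq> {Poly_Mapping.single k (int j) | j. j \<le> degree r}"
  unfolding lpoly_of_poly_expansion by (rule order_trans[OF keys_sum]) auto

section \<open>The weak Nullstellensatz\<close>

interpretation lpoly_space: vector_space "\<lambda>c (p::lpoly). lconst c * p"
proof
  fix a b :: complex and x y :: lpoly
  show "lconst a * (x + y) = lconst a * x + lconst a * y" by (simp add: distrib_left)
  show "lconst (a + b) * x = lconst a * x + lconst b * x" by (simp add: lconst_add distrib_right)
  show "lconst a * (lconst b * x) = lconst (a * b) * x" by (simp add: lconst_mult mult.assoc)
  show "lconst 1 * x = x" by simp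
qed

lemma lpoly_space_span_monomials:
  assumes "Poly_Mapping.keys p \<subseteq> A"
  shows "p \<in> lpoly_space.span ((\<lambda>\<alpha>. Poly_Mapping.single \<alpha> 1) ` A)"
  using assms by (subst lpoly_monomial_expansion[of p])
    (intro lpoly_space.span_sum lpoly_space.span_scale lpoly_space.span_base, auto)

definition exp_box :: "nat \<Rightarrow> nat \<Rightarrow> (nat \<Rightarrow>\<^sub>0 int) set" where
  "exp_box d N = {\<alpha>. Poly_Mapping.keys \<alpha> \<subseteq> {..d} \<and> (\<forall>i. \<bar>Poly_Mapping.lookup \<alpha> i\<bar> \<le> int N)}"

lemma finite_exp_box: "finite (exp_box d N)"
proof -
  have "exp_box d N =
      {\<alpha>. Poly_Mapping.keys \<alpha> \<subseteq> {..d} \<and> (\<forall>i. Poly_Mapping.lookup \<alpha> i \<in> {-int N..int N})}"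
    unfolding exp_box_def by (auto simp: abs_le_iff) (metis minus_le_iff)+
  then show ?thesis using finite_poly_mappings_bounded[of "{..d}" "\<lambda>_. {-int N..int N}"] by simp
qed

lemma keys_subset_exp_box:
  assumes "p \<in> ring_d d"
  shows "\<exists>N. Poly_Mapping.keys p \<subseteq> exp_box d N"
proof -
  define N where "N = Max (insert 0 ((\<lambda>(\<alpha>, i). nat \<bar>Poly_Mapping.lookup \<alpha> i\<bar>) ` (Poly_Mapping.keys p \<times> {..d})))"
  have "Poly_Mapping.keys p \<subseteq> exp_box d N"
  proof
    fix \<alpha> assume \<alpha>: "\<alpha> \<in> Poly_Mapping.keys p"
    then have keys: "Poly_Mapping.keys \<alpha> \<subseteq> {..d}" using assms by (auto simp: ring_d_iff ring_d_exp_def)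
    have "\<bar>Poly_Mapping.lookup \<alpha> i\<bar> \<le> int N" for i
    proof (cases "i \<le> d")
      case True
      then have "nat \<bar>Poly_Mapping.lookup \<alpha> i\<bar> \<le> N"
        unfolding N_def using \<alpha> by (intro Max_ge) force+
      then show ?thesis by linarith
    next
      case False
      then have "i \<notin> Poly_Mapping.keys \<alpha>" using keys by auto
      then show ?thesis by (simp add: in_keys_iff)
    qed
    then show "\<alpha> \<in> exp_box d N" using keys by (simp add: exp_box_def)
  qed
  then show ?thesis by blast
qed

lemma countable_independent_ring_d:
  assumes S: "S \<subseteq> ring_d d" and indep: "lpoly_space.independent S"
  shows "countable S"
proof -
  define S_N where "S_N N = {p \<in> S. Poly_Mapping.keys p \<subseteq> exp_box d N}" for N
  have S_eq: "S = (\<Union>N. S_N N)"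
  proof
    show "S \<subseteq> (\<Union>N. S_N N)"
    proof
      fix p assume "p \<in> S"
      then obtain N where "Poly_Mapping.keys p \<subseteq> exp_box d N" using S keys_subset_exp_box by blast
      then show "p \<in> (\<Union>N. S_N N)" using \<open>p \<in> S\<close> unfolding S_N_def by blast
    qed
  qed (auto simp: S_N_def)
  have "finite (S_N N)" for N
  proof (rule conjunct1[OF lpoly_space.independent_span_bound])
    show "finite ((\<lambda>\<alpha>. Poly_Mapping.single \<alpha> 1) ` exp_box d N)"
      by (simp add: finite_exp_box)
    show "lpoly_space.independent (S_N N)"
      using indep by (rule lpoly_space.independent_mono) (simp add: S_N_def)
    show "S_N N \<subseteq> lpoly_space.span ((\<lambda>\<alpha>. Poly_Mapping.single \<alpha> 1) ` exp_box d N)"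
      unfolding S_N_def using lpoly_space_span_monomials by blast
  qed
  then show ?thesis by (subst S_eq) (intro countable_UN[OF countableI_type] countable_finite)
qed

lemma poly_lagrange_sum:
  fixes c :: "'a::idom \<Rightarrow> 'a"
  assumes F: "finite F" and a: "a \<in> F"
  shows "poly (\<Sum>b\<in>F. smult (c b) (\<Prod>b'\<in>F - {b}. [:- b', 1:])) a = c a * (\<Prod>b'\<in>F - {a}. a - b')"
proof -
  have "(\<Prod>b'\<in>F - {b}. a - b') = 0" if "b \<in> F - {a}" for b
    using F a that by (intro prod_zero) (auto intro!: bexI[of _ a])
  then have "(\<Sum>b\<in>F - {a}. c b * (\<Prod>b'\<in>F - {b}. a - b')) = 0"
    by simp
  then show ?thesis
    using F a by (simp add: poly_sum poly_prod sum.remove)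
qed

text \<open>If \<open>u\<^sub>a\<close> inverts \<open>x\<^sub>k - a\<close> modulo \<open>K\<close>, multiplying a relation \<open>\<Sum> c\<^sub>a u\<^sub>a \<in> K\<close> by
  \<open>\<Prod>\<^sub>b (x\<^sub>k - b)\<close> yields a univariate polynomial in \<open>K\<close> whose value at \<open>a\<close> is a nonzero multiple
  of \<open>c\<^sub>a\<close>.\<close>
lemma inverses_of_shifts_independent:
  assumes K: "ring_d_ideal d K" and kd: "k \<le> d"
    and no_univariate: "\<And>p. p \<noteq> 0 \<Longrightarrow> lpoly_of_poly k p \<notin> K"
    and F: "finite F" and u: "\<And>a. a \<in> F \<Longrightarrow> u a \<in> ring_d d"
      "\<And>a. a \<in> F \<Longrightarrow> u a * (lvar k - lconst a) - 1 \<in> K"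
    and rel: "(\<Sum>a\<in>F. lconst (c a) * u a) \<in> K" and a: "a \<in> F"
  shows "c a = 0"
proof -
  define P where "P a = (\<Prod>b\<in>F - {a}. [:- b, 1:])" for a
  define Q where "Q = (\<Sum>a\<in>F. smult (c a) (P a))"
  define E where "E = lpoly_of_poly k (\<Prod>b\<in>F. [:- b, 1:])"
  have E: "E = (lvar k - lconst a) * lpoly_of_poly k (P a)" if "a \<in> F" for a
  proof -
    have "(\<Prod>b\<in>F. [:- b, 1:]) = [:- a, 1:] * P a"
      unfolding P_def using that F by (simp add: prod.remove)
    then show ?thesis unfolding E_def by (simp only: lpoly_of_poly_mult lpoly_of_poly_linear_root)
  qed
  have summand: "lconst (c a) * u a * E - lconst (c a) * lpoly_of_poly k (P a)
      = lconst (c a) * ((u a * (lvar k - lconst a) - 1) * lpoly_of_poly k (P a))" if "a \<in> F" for a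
    unfolding E[OF that] by (simp add: algebra_simps)
  have "(\<Sum>a\<in>F. lconst (c a) * u a) * E - lpoly_of_poly k Q
        = (\<Sum>a\<in>F. lconst (c a) * ((u a * (lvar k - lconst a) - 1) * lpoly_of_poly k (P a)))"
    unfolding Q_def lpoly_of_poly_sum lpoly_of_poly_smult sum_distrib_right sum_subtractf[symmetric]
    by (intro sum.cong refl summand)
  also have "\<dots> \<in> K"
    using kd u(2) by (intro ideal_sum[OF K] ideal_lconst_mult[OF K] ideal_mult_right[OF K] ring_d_lpoly_of_poly)
  finally have rel_E: "(\<Sum>a\<in>F. lconst (c a) * u a) * E - lpoly_of_poly k Q \<in> K" .
  have "(\<Sum>a\<in>F. lconst (c a) * u a) * E \<in> K"
    using kd rel unfolding E_def by (intro ideal_mult_right[OF K] ring_d_lpoly_of_poly)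
  from ideal_diff[OF K this rel_E] have "lpoly_of_poly k Q \<in> K" by simp
  then have "Q = 0" using no_univariate by blast
  then have "poly Q a = 0" by simp
  moreover have "poly Q a = c a * (\<Prod>b\<in>F - {a}. a - b)"
    unfolding Q_def P_def using F a by (rule poly_lagrange_sum)
  moreover have "(\<Prod>b\<in>F - {a}. a - b) \<noteq> 0" using F by simp
  ultimately show "c a = 0" by simp
qed

lemma countable_invertible_shifts:
  assumes K: "ring_d_ideal d K" and kd: "k \<le> d"
    and no_univariate: "\<And>p. p \<noteq> 0 \<Longrightarrow> lpoly_of_poly k p \<notin> K"
  shows "countable {a. \<exists>u\<in>ring_d d. u * (lvar k - lconst a) - 1 \<in> K}"
    (is "countable ?U")
proof -
  have "\<forall>a\<in>?U. \<exists>u. u \<in> ring_d d \<and> u * (lvar k - lconst a) - 1 \<in> K" by blast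
  from bchoice[OF this] obtain u
    where "\<forall>a\<in>?U. u a \<in> ring_d d \<and> u a * (lvar k - lconst a) - 1 \<in> K" by blast
  then have u: "\<And>a. a \<in> ?U \<Longrightarrow> u a \<in> ring_d d"
    "\<And>a. a \<in> ?U \<Longrightarrow> u a * (lvar k - lconst a) - 1 \<in> K" by auto
  have indep: "c a = 0"
    if "finite F" "F \<subseteq> ?U" "(\<Sum>a\<in>F. lconst (c a) * u a) \<in> K" "a \<in> F" for F c a
    using that(2) by (intro inverses_of_shifts_independent[OF K kd no_univariate that(1) _ _ that(3,4)] u) auto
  have inj: "inj_on u ?U"
  proof (rule inj_onI, rule ccontr)
    fix a b assume ab: "a \<in> ?U" "b \<in> ?U" "u a = u b" "a \<noteq> b"
    let ?c = "\<lambda>x. if x = a then 1 else -1 :: complex"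
    have "(\<Sum>x\<in>{a, b}. lconst (?c x) * u x) = 0"
      using ab(3,4) by (simp add: lconst_uminus)
    then have "(\<Sum>x\<in>{a, b}. lconst (?c x) * u x) \<in> K" using ideal_0[OF K] by simp
    with ab(1,2) have "?c a = 0" by (intro indep[of "{a, b}" ?c a]) auto
    then show False by simp
  qed
  have "lpoly_space.independent (u ` ?U)"
    unfolding lpoly_space.independent_explicit_module
  proof (intro allI impI)
    fix A w v assume A: "finite A" "A \<subseteq> u ` ?U" "(\<Sum>v\<in>A. lconst (w v) * v) = 0" and "v \<in> A"
    obtain F where F: "F \<subseteq> ?U" "A = u ` F" using A(2) by (meson subset_imageE)
    obtain a where "a \<in> F" "v = u a" using \<open>v \<in> A\<close> F(2) by blast
    have "inj_on u F" using inj F(1) by (rule inj_on_subset)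
    then have "(\<Sum>a\<in>F. lconst (w (u a)) * u a) = (\<Sum>v\<in>A. lconst (w v) * v)"
      unfolding F(2) by (simp add: sum.reindex)
    then have "(\<Sum>a\<in>F. lconst (w (u a)) * u a) \<in> K" using A(3) ideal_0[OF K] by simp
    moreover have "finite F" using A(1) F(2) \<open>inj_on u F\<close> by (simp add: finite_image_iff)
    ultimately have "w (u a) = 0" using F(1) \<open>a \<in> F\<close> by (intro indep[of F "\<lambda>a. w (u a)" a])
    then show "w v = 0" using \<open>v = u a\<close> by simp
  qed
  then have "countable (u ` ?U)" using u(1) by (intro countable_independent_ring_d) auto
  then show ?thesis using inj by (rule countable_image_inj_on)
qed

definition maximal_ideal :: "nat \<Rightarrow> lpoly set \<Rightarrow> bool" where
  "maximal_ideal d m \<longleftrightarrow> ring_d_ideal d m \<and> 1 \<notin> m \<and>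
     (\<forall>m'. ring_d_ideal d m' \<and> m \<subseteq> m' \<and> 1 \<notin> m' \<longrightarrow> m' = m)"

lemma ring_d_ideal_Union_chain:
  assumes "C \<noteq> {}" "\<And>X. X \<in> C \<Longrightarrow> ring_d_ideal d X"
    and "\<And>X Y. X \<in> C \<Longrightarrow> Y \<in> C \<Longrightarrow> X \<subseteq> Y \<or> Y \<subseteq> X"
  shows "ring_d_ideal d (\<Union>C)"
  unfolding ring_d_ideal_def
proof (intro conjI ballI)
  show "\<Union>C \<subseteq> ring_d d" using assms(2) ideal_subset by blast
  show "0 \<in> \<Union>C" using assms(1,2) ideal_0 by blast
next
  fix x y assume "x \<in> \<Union>C" "y \<in> \<Union>C"
  then obtain X Y where XY: "X \<in> C" "Y \<in> C" "x \<in> X" "y \<in> Y" by blast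
  then consider "X \<subseteq> Y" | "Y \<subseteq> X" using assms(3) by blast
  then show "x + y \<in> \<Union>C"
    by cases (use XY assms(2) ideal_add in blast)+
next
  fix r x assume "r \<in> ring_d d" "x \<in> \<Union>C"
  then show "r * x \<in> \<Union>C" using assms(2) ideal_mult_left by blast
qed

lemma ex_maximal_ideal:
  assumes J: "ring_d_ideal d J" and "1 \<notin> J"
  shows "\<exists>m. maximal_ideal d m \<and> J \<subseteq> m"
proof -
  let ?A = "{m. ring_d_ideal d m \<and> J \<subseteq> m \<and> 1 \<notin> m}"
  have "\<exists>M\<in>?A. \<forall>X\<in>?A. M \<subseteq> X \<longrightarrow> X = M"
  proof (rule Zorn_Lemma2, rule ballI)
    fix C assume C: "C \<in> chains ?A"
    show "\<exists>U\<in>?A. \<forall>X\<in>C. X \<subseteq> U"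
    proof (cases "C = {}")
      case True
      have "J \<in> ?A" using assms by simp
      then show ?thesis using True by blast
    next
      case False
      have sub: "C \<subseteq> ?A" using C unfolding chains_def by simp
      have "X \<subseteq> Y \<or> Y \<subseteq> X" if "X \<in> C" "Y \<in> C" for X Y
        using C that unfolding chains_def chain_subset_def by simp
      then have "ring_d_ideal d (\<Union>C)" using False sub by (intro ring_d_ideal_Union_chain) auto
      moreover have "J \<subseteq> \<Union>C" "1 \<notin> \<Union>C" using False sub by auto
      ultimately show ?thesis by blast
    qed
  qed
  then obtain M where M: "M \<in> ?A" "\<forall>X\<in>?A. M \<subseteq> X \<longrightarrow> X = M" by blast
  have "m' = M" if "ring_d_ideal d m'" "M \<subseteq> m'" "1 \<notin> m'" for m'
    using M that by blast
  then show ?thesis using M(1) unfolding maximal_ideal_def by blast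
qed

lemma maximal_ideal_invertible:
  assumes m: "maximal_ideal d m" and f: "f \<in> ring_d d" "f \<notin> m"
  shows "\<exists>h\<in>ring_d d. h * f - 1 \<in> m"
proof -
  have K: "ring_d_ideal d m" using m by (simp add: maximal_ideal_def)
  have "1 \<in> ideal_adjoin d m f"
  proof (rule ccontr)
    assume "1 \<notin> ideal_adjoin d m f"
    then have "ideal_adjoin d m f = m"
      using m ring_d_ideal_adjoin[OF K f(1)] subset_ideal_adjoin[OF K f(1)]
      unfolding maximal_ideal_def by blast
    then show False using in_ideal_adjoin[OF K f(1)] f(2) by simp
  qed
  then show ?thesis by (rule one_in_ideal_adjoin_imp[OF K])
qed

text \<open>Over an algebraically closed field a univariate polynomial factors into linear factors,
  each of which is a unit modulo \<open>m\<close>.\<close>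
lemma no_univariate_if_shifts_invertible:
  assumes m: "ring_d_ideal d m" "1 \<notin> m" and kd: "k \<le> d"
    and inv: "\<And>a. \<exists>h\<in>ring_d d. h * (lvar k - lconst a) - 1 \<in> m"
    and "p \<noteq> 0"
  shows "lpoly_of_poly k p \<notin> m"
  using \<open>p \<noteq> 0\<close>
proof (induction "degree p" arbitrary: p rule: less_induct)
  case less
  show ?case
  proof (cases "degree p = 0")
    case True
    then obtain c where "p = [:c:]" by (metis degree_eq_zeroE)
    then have "c \<noteq> 0" "lpoly_of_poly k p = lconst c"
      using less.prems by (auto simp: lpoly_of_poly_pCons)
    then show ?thesis using ideal_lconst_imp_one[OF m(1)] m(2) by metis
  next
    case False
    then obtain r where "poly p r = 0" using alg_closed_imp_poly_has_root[of p] by blast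
    then obtain q where pq: "p = [:- r, 1:] * q" by (metis dvdE poly_eq_0_iff_dvd)
    then have "q \<noteq> 0" using less.prems by auto
    then have "degree q < degree p" unfolding pq by (subst degree_mult_eq) auto
    then have q_notin: "lpoly_of_poly k q \<notin> m" using less.hyps \<open>q \<noteq> 0\<close> by blast
    obtain h where h: "h \<in> ring_d d" "h * (lvar k - lconst r) - 1 \<in> m" using inv by blast
    have "lpoly_of_poly k q = h * lpoly_of_poly k p - (h * (lvar k - lconst r) - 1) * lpoly_of_poly k q"
      unfolding pq lpoly_of_poly_mult lpoly_of_poly_linear_root by (simp add: algebra_simps)
    then show ?thesis
      using q_notin ideal_diff[OF m(1) ideal_mult_left[OF m(1) h(1)]
          ideal_mult_right[OF m(1) ring_d_lpoly_of_poly[OF kd] h(2)]]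
      by metis
  qed
qed

text \<open>Otherwise every \<open>x\<^sub>k - a\<close> would be a unit modulo \<open>m\<close>, contradicting
  \<open>countable_invertible_shifts\<close> since \<open>\<complex>\<close> is uncountable.\<close>
lemma maximal_ideal_var_value:
  assumes m: "maximal_ideal d m" and kd: "k \<le> d"
  shows "\<exists>a. lvar k - lconst a \<in> m"
proof (rule ccontr)
  assume no_value: "\<nexists>a. lvar k - lconst a \<in> m"
  have K: "ring_d_ideal d m" "1 \<notin> m" using m by (auto simp: maximal_ideal_def)
  have inv: "\<exists>h\<in>ring_d d. h * (lvar k - lconst a) - 1 \<in> m" for a
    using maximal_ideal_invertible[OF m] no_value kd by (meson ring_d_diff ring_d_lconst ring_d_lvar)
  have "countable {a. \<exists>u\<in>ring_d d. u * (lvar k - lconst a) - 1 \<in> m}"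
    using K kd inv by (intro countable_invertible_shifts no_univariate_if_shifts_invertible)
  moreover have "{a. \<exists>u\<in>ring_d d. u * (lvar k - lconst a) - 1 \<in> m} = UNIV" using inv by auto
  ultimately show False using uncountable_UNIV_complex by simp
qed

definition monomial_value :: "(nat \<Rightarrow> complex) \<Rightarrow> (nat \<Rightarrow>\<^sub>0 int) \<Rightarrow> complex" where
  "monomial_value x \<alpha> = (\<Prod>i\<in>Poly_Mapping.keys \<alpha>. x i powi Poly_Mapping.lookup \<alpha> i)"

lemma leval_eq_sum_monomial_value:
  "leval x p = (\<Sum>\<alpha>\<in>Poly_Mapping.keys p. Poly_Mapping.lookup p \<alpha> * monomial_value x \<alpha>)"
  by (simp add: leval_def monomial_value_def)

lemma monomial_value_0 [simp]: "monomial_value x 0 = 1"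
  by (simp add: monomial_value_def)

lemma monomial_value_update:
  assumes "i \<notin> Poly_Mapping.keys \<beta>" "t \<noteq> 0"
  shows "monomial_value x (Poly_Mapping.update i t \<beta>) = x i powi t * monomial_value x \<beta>"
proof -
  have "monomial_value x (Poly_Mapping.update i t \<beta>) =
     (\<Prod>j\<in>insert i (Poly_Mapping.keys \<beta>). x j powi Poly_Mapping.lookup (Poly_Mapping.update i t \<beta>) j)"
    unfolding monomial_value_def using keys_update_nonzero[OF assms] by simp
  also have "\<dots> = x i powi t *
      (\<Prod>j\<in>Poly_Mapping.keys \<beta>. x j powi Poly_Mapping.lookup (Poly_Mapping.update i t \<beta>) j)"
    using assms(1) by (simp add: lookup_update)
  also have "(\<Prod>j\<in>Poly_Mapping.keys \<beta>. x j powi Poly_Mapping.lookup (Poly_Mapping.update i t \<beta>) j)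
      = monomial_value x \<beta>"
    unfolding monomial_value_def using assms(1) by (intro prod.cong refl) (auto simp: lookup_update)
  finally show ?thesis .
qed

lemma ring_d_exp_update:
  assumes "i \<notin> Poly_Mapping.keys \<beta>" "t \<noteq> 0" "ring_d_exp d (Poly_Mapping.update i t \<beta>)"
  shows "ring_d_exp d \<beta>" "i \<le> d" "i = d \<Longrightarrow> 0 \<le> t"
proof -
  have keys: "Poly_Mapping.keys (Poly_Mapping.update i t \<beta>) = insert i (Poly_Mapping.keys \<beta>)"
    using keys_update_nonzero[OF assms(1,2)] .
  have lookup_d: "0 \<le> Poly_Mapping.lookup (Poly_Mapping.update i t \<beta>) d"
    using assms(3) by (simp add: ring_d_exp_def)
  show "i \<le> d" using assms(3) keys by (auto simp: ring_d_exp_def)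
  show "i = d \<Longrightarrow> 0 \<le> t" using lookup_d by (simp add: lookup_update)
  have "0 \<le> Poly_Mapping.lookup \<beta> d"
    using lookup_d assms(1) by (cases "i = d") (auto simp: lookup_update in_keys_iff)
  then show "ring_d_exp d \<beta>" using assms(3) keys by (auto simp: ring_d_exp_def)
qed

context
  fixes d m x
  assumes m: "ring_d_ideal d m"
    and lvar_cong: "\<And>i. i \<le> d \<Longrightarrow> lvar i - lconst (x i) \<in> m"
    and x_nonzero: "\<And>i. i < d \<Longrightarrow> x i \<noteq> 0"
begin

lemma var_power_cong_value:
  assumes i: "i \<le> d" and t: "i = d \<Longrightarrow> 0 \<le> t"
  shows "Poly_Mapping.single (Poly_Mapping.single i t) 1 - lconst (x i powi t) \<in> m"
proof (cases "0 \<le> t")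
  case True
  then obtain n where t: "t = int n" using nonneg_int_cases by blast
  have "lvar i ^ n - lconst (x i) ^ n \<in> m"
    using i by (intro ideal_cong_power[OF m lvar_cong] ring_d_lvar) auto
  then show ?thesis by (simp add: t single_var_power lconst_power)
next
  case False
  then have "t = - int (nat (- t))" by simp
  then obtain n where t: "t = - int n" by blast
  have "i \<noteq> d" using False assms(2) by blast
  then have i: "i < d" using assms(1) by simp
  then have xi: "x i \<noteq> 0" by (rule x_nonzero)
  have "- (lvar_inv i * lconst (inverse (x i))) * (lvar i - lconst (x i))
      = - (lvar i * lvar_inv i) * lconst (inverse (x i)) + lvar_inv i * lconst (inverse (x i) * x i)"
    by (simp add: lconst_mult algebra_simps)
  also have "\<dots> = lvar_inv i - lconst (inverse (x i))" using xi by (simp add: lvar_mult_lvar_inv)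
  finally have "lvar_inv i - lconst (inverse (x i))
      = - (lvar_inv i * lconst (inverse (x i))) * (lvar i - lconst (x i))" by simp
  also have "\<dots> \<in> m"
    using i by (intro ideal_mult_left[OF m] lvar_cong ring_d_uminus ring_d_mult ring_d_lvar_inv) auto
  finally have "lvar_inv i ^ n - lconst (inverse (x i)) ^ n \<in> m"
    using i by (intro ideal_cong_power[OF m] ring_d_lvar_inv) auto
  then show ?thesis
    by (simp add: t single_var_power_neg lconst_power[symmetric] power_int_minus power_inverse)
qed

lemma monomial_cong_value:
  "ring_d_exp d \<alpha> \<Longrightarrow> Poly_Mapping.single \<alpha> 1 - lconst (monomial_value x \<alpha>) \<in> m"
proof (induction \<alpha> rule: update_induct)
  case const
  then show ?case using ideal_0[OF m] by (simp add: monomial_value_def)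
next
  case (update \<beta> i t)
  note exp = ring_d_exp_update[OF update(1,2,4)]
  have "Poly_Mapping.single (Poly_Mapping.single i t) 1 * Poly_Mapping.single \<beta> 1
      - lconst (x i powi t) * lconst (monomial_value x \<beta>) \<in> m"
  proof (rule ideal_cong_mult[OF m])
    show "Poly_Mapping.single (Poly_Mapping.single i t) 1 - lconst (x i powi t) \<in> m"
      using exp(2,3) by (rule var_power_cong_value)
    show "Poly_Mapping.single \<beta> 1 - lconst (monomial_value x \<beta>) \<in> m"
      using exp(1) by (rule update.IH)
    show "Poly_Mapping.single (Poly_Mapping.single i t) 1 \<in> ring_d d"
      using exp(2,3) by (intro ring_d_single ring_d_exp_single)
  qed simp
  moreover have "Poly_Mapping.single (Poly_Mapping.update i t \<beta>) (1::complex)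
      = Poly_Mapping.single (Poly_Mapping.single i t) 1 * Poly_Mapping.single \<beta> 1"
    by (simp add: update_eq_single_plus[OF update(1)] mult_single)
  ultimately show ?case
    unfolding monomial_value_update[OF update(1,2)] lconst_mult by simp
qed

lemma lpoly_cong_value:
  assumes f: "f \<in> ring_d d"
  shows "f - lconst (leval x f) \<in> m"
proof -
  have "lconst (leval x f)
      = (\<Sum>\<alpha>\<in>Poly_Mapping.keys f. lconst (Poly_Mapping.lookup f \<alpha>) * lconst (monomial_value x \<alpha>))"
    by (simp add: leval_eq_sum_monomial_value lconst_sum lconst_mult)
  then have "f - lconst (leval x f) = (\<Sum>\<alpha>\<in>Poly_Mapping.keys f.
      lconst (Poly_Mapping.lookup f \<alpha>) * (Poly_Mapping.single \<alpha> 1 - lconst (monomial_value x \<alpha>)))"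
    by (subst (1) lpoly_monomial_expansion[of f]) (simp add: right_diff_distrib sum_subtractf)
  also have "\<dots> \<in> m"
    using f by (intro ideal_sum[OF m] ideal_lconst_mult[OF m] monomial_cong_value) (auto simp: ring_d_iff)
  finally show ?thesis .
qed

end

text \<open>A maximal ideal contains some \<open>x\<^sub>i - a\<^sub>i\<close> for every coordinate; then every \<open>f\<close> is congruent
  to its value at \<open>a\<close>, which must vanish on \<open>J\<close>. The \<open>a\<^sub>i\<close> with \<open>i < d\<close> are nonzero because
  \<open>x\<^sub>i\<close> is a unit of the ring.\<close>
theorem weak_nullstellensatz:
  assumes J: "ring_d_ideal d J" and "1 \<notin> J"
  shows "\<exists>x. (\<forall>i<d. x i \<noteq> 0) \<and> (\<forall>i>d. x i = 0) \<and> (\<forall>f\<in>J. leval x f = 0)"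
proof -
  obtain m where m: "maximal_ideal d m" "J \<subseteq> m"
    using ex_maximal_ideal[OF assms] by blast
  then have K: "ring_d_ideal d m" "1 \<notin> m" by (auto simp: maximal_ideal_def)
  obtain a where a: "\<And>i. i \<le> d \<Longrightarrow> lvar i - lconst (a i) \<in> m"
    using maximal_ideal_var_value[OF m(1)] by metis
  define x where "x i = (if i \<le> d then a i else 0)" for i
  have lvar_cong: "lvar i - lconst (x i) \<in> m" if "i \<le> d" for i using a that by (simp add: x_def)
  have x_nonzero: "x i \<noteq> 0" if i: "i < d" for i
  proof
    assume "x i = 0"
    then have "lvar_inv i * lvar i \<in> m"
      using lvar_cong[of i] i by (intro ideal_mult_left[OF K(1)] ring_d_lvar_inv) auto
    moreover have "lvar_inv i * lvar i = 1" by (simp add: mult.commute[of "lvar_inv i"] lvar_mult_lvar_inv)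
    ultimately show False using K(2) by simp
  qed
  have "leval x f = 0" if "f \<in> J" for f
  proof (rule ccontr)
    assume "leval x f \<noteq> 0"
    have "f \<in> m" using that m(2) by blast
    moreover have "f - lconst (leval x f) \<in> m"
      using \<open>f \<in> m\<close> ideal_subset[OF K(1)] by (intro lpoly_cong_value[OF K(1) lvar_cong x_nonzero])
    ultimately have "f - (f - lconst (leval x f)) \<in> m" by (rule ideal_diff[OF K(1)])
    then show False using ideal_lconst_imp_one[OF K(1)] K(2) \<open>leval x f \<noteq> 0\<close> by simp
  qed
  moreover have "\<forall>i>d. x i = 0" by (simp add: x_def)
  ultimately show ?thesis using x_nonzero by blast
qed

lemma leval_add: "leval x (p + q) = leval x p + leval x q"
proof -
  let ?S = "Poly_Mapping.keys p \<union> Poly_Mapping.keys q"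
  have sum_S: "leval x r = (\<Sum>\<alpha>\<in>?S. Poly_Mapping.lookup r \<alpha> * monomial_value x \<alpha>)"
    if "Poly_Mapping.keys r \<subseteq> ?S" for r
    unfolding leval_eq_sum_monomial_value using that
    by (intro sum.mono_neutral_left) (auto simp: in_keys_iff)
  have "leval x (p + q) = (\<Sum>\<alpha>\<in>?S. Poly_Mapping.lookup (p + q) \<alpha> * monomial_value x \<alpha>)"
    using keys_add[of p q] by (intro sum_S)
  also have "\<dots> = (\<Sum>\<alpha>\<in>?S. Poly_Mapping.lookup p \<alpha> * monomial_value x \<alpha>)
      + (\<Sum>\<alpha>\<in>?S. Poly_Mapping.lookup q \<alpha> * monomial_value x \<alpha>)"
    by (simp add: lookup_add distrib_right sum.distrib)
  also have "\<dots> = leval x p + leval x q"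
    by (subst (1 2) sum_S) auto
  finally show ?thesis .
qed

lemma leval_diff: "leval x (p - q) = leval x p - leval x q"
  using leval_add[of x p "- q"] by (simp add: leval_eq_sum_monomial_value sum_negf)

lemma leval_lconst: "leval x (lconst a) = a"
  by (cases "a = 0") (simp_all add: leval_eq_sum_monomial_value lconst_def)

lemma leval_lvar: "leval x (lvar k) = x k"
  by (simp add: leval_eq_sum_monomial_value lvar_def monomial_value_def)

section \<open>Finiteness of the quotient by the critical ideal\<close>

text \<open>If no univariate polynomial in \<open>x\<^sub>k\<close> lay in the critical ideal \<open>I\<close>, then for all but
  countably many \<open>a\<close> the ideal \<open>I + (x\<^sub>k - a)\<close> would be proper, and the Nullstellensatz would give
  a critical point with \<open>x\<^sub>k = a\<close> for each of these uncountably many \<open>a\<close>.\<close>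
lemma crit_ideal_contains_univariate:
  assumes gens: "\<forall>j\<le>d. crit_gens d \<Phi> j \<in> ring_d d"
    and fin: "finite (crit_points d \<Phi>)"
    and kd: "k \<le> d"
  shows "\<exists>p. p \<noteq> 0 \<and> lpoly_of_poly k p \<in> crit_ideal d \<Phi>"
proof (rule ccontr)
  let ?I = "crit_ideal d \<Phi>"
  let ?U = "{a. \<exists>u\<in>ring_d d. u * (lvar k - lconst a) - 1 \<in> ?I}"
  have I: "ring_d_ideal d ?I" using ring_d_ideal_crit_ideal[OF gens] .
  assume "\<not> ?thesis"
  then have "countable ?U" by (intro countable_invertible_shifts[OF I kd]) blast
  have shift: "lvar k - lconst a \<in> ring_d d" for a using kd by (intro ring_d_diff ring_d_lvar) auto
  have "a \<in> (\<lambda>x. x k) ` crit_points d \<Phi>" if "a \<notin> ?U" for a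
  proof -
    let ?J = "ideal_adjoin d ?I (lvar k - lconst a)"
    have "1 \<notin> ?J" using one_in_ideal_adjoin_imp[OF I] that by blast
    then obtain x where x: "\<forall>i<d. x i \<noteq> 0" "\<forall>i>d. x i = 0" "\<forall>f\<in>?J. leval x f = 0"
      using weak_nullstellensatz[OF ring_d_ideal_adjoin[OF I shift]] by blast
    have "\<forall>j\<le>d. leval x (crit_gens d \<Phi> j) = 0"
      using x(3) subset_ideal_adjoin[OF I shift] crit_gens_in_crit_ideal by blast
    then have "x \<in> crit_points d \<Phi>" using x(1,2) unfolding crit_points_def by blast
    moreover have "leval x (lvar k - lconst a) = 0" using x(3) in_ideal_adjoin[OF I shift] by blast
    then have "x k = a" by (simp add: leval_diff leval_lvar leval_lconst)
    ultimately show ?thesis by blast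
  qed
  then have "- ?U \<subseteq> (\<lambda>x. x k) ` crit_points d \<Phi>" by blast
  then have "countable (- ?U)" using fin by (meson countable_finite finite_imageI finite_subset)
  with \<open>countable ?U\<close> have "countable (?U \<union> - ?U)" by (rule countable_Un)
  then show False using uncountable_UNIV_complex by simp
qed

lemma lpoly_of_poly_cong_mod:
  assumes K: "ring_d_ideal d K" and kd: "k \<le> d" and q: "lpoly_of_poly k q \<in> K"
  shows "lpoly_of_poly k s - lpoly_of_poly k (s mod q) \<in> K"
proof -
  have "lpoly_of_poly k s = lpoly_of_poly k (s div q) * lpoly_of_poly k q + lpoly_of_poly k (s mod q)"
    by (metis div_mult_mod_eq lpoly_of_poly_add lpoly_of_poly_mult)
  then show ?thesis
    using kd q by (simp add: ideal_mult_left[OF K] ring_d_lpoly_of_poly)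
qed

text \<open>Dividing out a power of \<open>x\<^sub>k\<close>, which is a unit for \<open>k < d\<close>.\<close>
lemma univariate_nonvanishing_at_0:
  assumes K: "ring_d_ideal d K" and "p \<noteq> 0" "lpoly_of_poly k p \<in> K" and "k < d"
  shows "\<exists>q. q \<noteq> 0 \<and> lpoly_of_poly k q \<in> K \<and> poly q 0 \<noteq> 0"
proof -
  obtain q where q: "p = [:- 0, 1:] ^ order 0 p * q" "\<not> [:- 0, 1:] dvd q"
    using order_decomp[OF \<open>p \<noteq> 0\<close>] by blast
  let ?r = "order 0 p"
  have p: "lpoly_of_poly k p = lvar k ^ ?r * lpoly_of_poly k q"
    by (subst q(1)) (simp add: lpoly_of_poly_mult lpoly_of_poly_power lpoly_of_poly_linear)
  have "lvar_inv k ^ ?r * lvar k ^ ?r = 1"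
    by (simp add: power_mult_distrib[symmetric] mult.commute[of "lvar_inv k"] lvar_mult_lvar_inv)
  then have "lpoly_of_poly k q = lvar_inv k ^ ?r * lpoly_of_poly k p"
    by (simp add: p mult.assoc[symmetric])
  also have "\<dots> \<in> K" using assms by (intro ideal_mult_left[OF K] ring_d_power ring_d_lvar_inv)
  finally have "lpoly_of_poly k q \<in> K" .
  moreover have "q \<noteq> 0" using q(1) \<open>p \<noteq> 0\<close> by auto
  moreover have "poly q 0 \<noteq> 0" using q(2) by (simp add: poly_eq_0_iff_dvd)
  ultimately show ?thesis by blast
qed

text \<open>The inverse of \<open>x\<^sub>k\<close> is read off from \<open>q = c + x\<^sub>k q'\<close> with \<open>c \<noteq> 0\<close>.\<close>
lemma lvar_inv_cong_univariate:
  assumes K: "ring_d_ideal d K" and k: "k < d" and q: "lpoly_of_poly k q \<in> K" "poly q 0 \<noteq> 0"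
  shows "\<exists>h. lvar_inv k - lpoly_of_poly k h \<in> K"
proof -
  obtain c q' where cq: "q = pCons c q'" by (cases q)
  have c0: "c \<noteq> 0" using q(2) cq by simp
  define h where "h = smult (- inverse c) q'"
  have "lconst (inverse c) * lvar_inv k * lpoly_of_poly k q
     = lconst (inverse c * c) * lvar_inv k + lconst (inverse c) * (lvar k * lvar_inv k) * lpoly_of_poly k q'"
    by (simp add: cq lpoly_of_poly_pCons lconst_mult algebra_simps)
  also have "\<dots> = lvar_inv k - lpoly_of_poly k h"
    using c0 by (simp add: lvar_mult_lvar_inv h_def lpoly_of_poly_smult lconst_uminus del: smult_minus_left)
  finally have "lvar_inv k - lpoly_of_poly k h \<in> K"
    using k q(1) by (metis ideal_mult_left[OF K] ring_d_lconst ring_d_lvar_inv ring_d_mult)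
  then show ?thesis ..
qed

definition degree_box :: "(nat \<Rightarrow> nat) \<Rightarrow> nat set \<Rightarrow> (nat \<Rightarrow>\<^sub>0 int) set" where
  "degree_box D S = {\<beta>. Poly_Mapping.keys \<beta> \<subseteq> S \<and>
     (\<forall>i\<in>Poly_Mapping.keys \<beta>. 0 \<le> Poly_Mapping.lookup \<beta> i \<and> Poly_Mapping.lookup \<beta> i < int (D i))}"

lemma degree_box_mono: "S \<subseteq> T \<Longrightarrow> degree_box D S \<subseteq> degree_box D T"
  unfolding degree_box_def by auto

lemma finite_degree_box:
  assumes "finite S"
  shows "finite (degree_box D S)"
proof (rule finite_subset)
  show "degree_box D S \<subseteq>
      {\<beta>. Poly_Mapping.keys \<beta> \<subseteq> S \<and> (\<forall>i. Poly_Mapping.lookup \<beta> i \<in> {0..int (D i)})}"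
  proof
    fix \<beta> assume \<beta>: "\<beta> \<in> degree_box D S"
    have "Poly_Mapping.lookup \<beta> i \<in> {0..int (D i)}" for i
    proof (cases "i \<in> Poly_Mapping.keys \<beta>")
      case True then show ?thesis using \<beta> by (fastforce simp: degree_box_def)
    qed (simp add: in_keys_iff)
    then show "\<beta> \<in> {\<beta>. Poly_Mapping.keys \<beta> \<subseteq> S \<and> (\<forall>i. Poly_Mapping.lookup \<beta> i \<in> {0..int (D i)})}"
      using \<beta> by (simp add: degree_box_def)
  qed
  show "finite {\<beta>. Poly_Mapping.keys \<beta> \<subseteq> S \<and> (\<forall>i. Poly_Mapping.lookup \<beta> i \<in> {0..int (D i)})}"
    using assms by (rule finite_poly_mappings_bounded) simp
qed

lemma single_plus_in_degree_box:
  assumes "j < D i" "\<beta> \<in> degree_box D S" "i \<notin> S"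
  shows "Poly_Mapping.single i (int j) + \<beta> \<in> degree_box D (insert i S)"
proof -
  have keys: "Poly_Mapping.keys \<beta> \<subseteq> S" using assms(2) by (simp add: degree_box_def)
  then have "Poly_Mapping.lookup \<beta> i = 0" using assms(3) by (auto simp: in_keys_iff)
  then have lookup: "Poly_Mapping.lookup (Poly_Mapping.single i (int j) + \<beta>) l =
      (if l = i then int j else Poly_Mapping.lookup \<beta> l)" for l
    by (simp add: lookup_add lookup_single when_def)
  show ?thesis
    using assms keys keys_add[of "Poly_Mapping.single i (int j)" \<beta>]
    unfolding degree_box_def by (auto simp: lookup in_keys_iff split: if_splits)
qed

lemma keys_mult_in_degree_box:
  assumes "r = 0 \<or> degree r < D i" "Poly_Mapping.keys g \<subseteq> degree_box D S" "i \<notin> S"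
  shows "Poly_Mapping.keys (lpoly_of_poly i r * g) \<subseteq> degree_box D (insert i S)"
proof
  fix \<gamma> assume "\<gamma> \<in> Poly_Mapping.keys (lpoly_of_poly i r * g)"
  then obtain \<alpha> \<beta> where \<gamma>: "\<gamma> = \<alpha> + \<beta>" "\<alpha> \<in> Poly_Mapping.keys (lpoly_of_poly i r)"
    "\<beta> \<in> Poly_Mapping.keys g"
    using keys_mult by blast
  then have "r \<noteq> 0" by auto
  with \<gamma>(2) keys_lpoly_of_poly obtain j where j: "\<alpha> = Poly_Mapping.single i (int j)" "j \<le> degree r"
    by blast
  then have "j < D i" using assms(1) \<open>r \<noteq> 0\<close> by simp
  then show "\<gamma> \<in> degree_box D (insert i S)"
    unfolding \<gamma>(1) j(1) using \<gamma>(3) assms(2,3) by (intro single_plus_in_degree_box) auto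
qed

lemma ring_d_exp_degree_box: "\<alpha> \<in> degree_box D {..d} \<Longrightarrow> ring_d_exp d \<alpha>"
  by (cases "d \<in> Poly_Mapping.keys \<alpha>") (auto simp: degree_box_def ring_d_exp_def in_keys_iff)

context
  fixes d K q
  assumes K: "ring_d_ideal d K"
    and q: "\<And>k. k \<le> d \<Longrightarrow> q k \<noteq> 0 \<and> lpoly_of_poly k (q k) \<in> K \<and> (k < d \<longrightarrow> poly (q k) 0 \<noteq> 0)"
begin

lemma var_power_cong_low_degree:
  assumes kd: "k \<le> d" and t_nonneg: "k = d \<Longrightarrow> 0 \<le> t"
  shows "\<exists>r. (r = 0 \<or> degree r < degree (q k)) \<and>
     Poly_Mapping.single (Poly_Mapping.single k t) 1 - lpoly_of_poly k r \<in> K"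
proof -
  have q0: "q k \<noteq> 0" and qK: "lpoly_of_poly k (q k) \<in> K" using q[OF kd] by auto
  have low: "s mod q k = 0 \<or> degree (s mod q k) < degree (q k)" for s
    using degree_mod_less[OF q0] by blast
  show ?thesis
  proof (cases "0 \<le> t")
    case True
    then obtain n where t: "t = int n" using nonneg_int_cases by blast
    have "lpoly_of_poly k ([:0, 1:] ^ n) = Poly_Mapping.single (Poly_Mapping.single k t) 1"
      by (simp add: t lpoly_of_poly_power lpoly_of_poly_linear single_var_power)
    then show ?thesis using lpoly_of_poly_cong_mod[OF K kd qK] low by metis
  next
    case False
    then have "t = - int (nat (- t))" by simp
    then obtain n where t: "t = - int n" by blast
    have "k \<noteq> d" using False t_nonneg by blast
    then have kl: "k < d" using kd by simp
    moreover have "poly (q k) 0 \<noteq> 0" using q[OF kd] kl by blast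
    ultimately obtain h where "lvar_inv k - lpoly_of_poly k h \<in> K"
      using lvar_inv_cong_univariate[OF K _ qK] by blast
    then have "lvar_inv k ^ n - lpoly_of_poly k h ^ n \<in> K"
      using kl kd by (intro ideal_cong_power[OF K] ring_d_lvar_inv ring_d_lpoly_of_poly)
    moreover have "lpoly_of_poly k (h ^ n) - lpoly_of_poly k (h ^ n mod q k) \<in> K"
      by (rule lpoly_of_poly_cong_mod[OF K kd qK])
    ultimately have "lvar_inv k ^ n - lpoly_of_poly k (h ^ n mod q k) \<in> K"
      using ideal_cong_trans[OF K] by (simp add: lpoly_of_poly_power)
    moreover have "lvar_inv k ^ n = Poly_Mapping.single (Poly_Mapping.single k t) 1"
      by (simp add: t single_var_power_neg)
    ultimately show ?thesis using low by metis
  qed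
qed

lemma monomial_cong_degree_box:
  "ring_d_exp d \<alpha> \<Longrightarrow> \<exists>g\<in>ring_d d. Poly_Mapping.keys g \<subseteq> degree_box (\<lambda>k. degree (q k)) (Poly_Mapping.keys \<alpha>) \<and>
      Poly_Mapping.single \<alpha> 1 - g \<in> K"
proof (induction \<alpha> rule: update_induct)
  case const
  have "Poly_Mapping.keys (1::lpoly) \<subseteq> degree_box (\<lambda>k. degree (q k)) (Poly_Mapping.keys 0)"
    by (simp add: degree_box_def)
  then show ?case using ideal_0[OF K] by (intro bexI[of _ 1]) auto
next
  case (update \<beta> i t)
  note exp = ring_d_exp_update[OF update(1,2,4)]
  obtain g where g: "g \<in> ring_d d" "Poly_Mapping.keys g \<subseteq> degree_box (\<lambda>k. degree (q k)) (Poly_Mapping.keys \<beta>)"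
    "Poly_Mapping.single \<beta> 1 - g \<in> K"
    using update.IH[OF exp(1)] by blast
  obtain r where r: "r = 0 \<or> degree r < degree (q i)"
    "Poly_Mapping.single (Poly_Mapping.single i t) 1 - lpoly_of_poly i r \<in> K"
    using var_power_cong_low_degree[OF exp(2,3)] by blast
  have "Poly_Mapping.single (Poly_Mapping.single i t) 1 \<in> ring_d d"
    using exp(2,3) by (intro ring_d_single ring_d_exp_single)
  then have "Poly_Mapping.single (Poly_Mapping.single i t) 1 * Poly_Mapping.single \<beta> 1
      - lpoly_of_poly i r * g \<in> K"
    by (rule ideal_cong_mult[OF K r(2) g(3) _ g(1)])
  moreover have "Poly_Mapping.single (Poly_Mapping.single i t) (1::complex) * Poly_Mapping.single \<beta> 1
     = Poly_Mapping.single (Poly_Mapping.update i t \<beta>) 1"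
    by (simp add: update_eq_single_plus[OF update(1)] mult_single)
  moreover have "lpoly_of_poly i r * g \<in> ring_d d"
    using exp(2) g(1) by (intro ring_d_mult ring_d_lpoly_of_poly)
  moreover have "Poly_Mapping.keys (lpoly_of_poly i r * g)
      \<subseteq> degree_box (\<lambda>k. degree (q k)) (Poly_Mapping.keys (Poly_Mapping.update i t \<beta>))"
    unfolding keys_update_nonzero[OF update(1,2)] using r(1) g(2) update(1)
    by (rule keys_mult_in_degree_box)
  ultimately show ?case by metis
qed

lemma lpoly_cong_degree_box:
  assumes f: "f \<in> ring_d d"
  shows "\<exists>g. Poly_Mapping.keys g \<subseteq> degree_box (\<lambda>k. degree (q k)) {..d} \<and> f - g \<in> K"
proof -
  let ?B = "degree_box (\<lambda>k. degree (q k)) {..d}"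
  have "\<exists>g. Poly_Mapping.keys g \<subseteq> ?B \<and> Poly_Mapping.single \<alpha> 1 - g \<in> K"
    if "\<alpha> \<in> Poly_Mapping.keys f" for \<alpha>
  proof -
    have exp: "ring_d_exp d \<alpha>" using that f by (simp add: ring_d_iff)
    then have "degree_box (\<lambda>k. degree (q k)) (Poly_Mapping.keys \<alpha>) \<subseteq> ?B"
      by (intro degree_box_mono) (simp add: ring_d_exp_def)
    then show ?thesis using monomial_cong_degree_box[OF exp] by blast
  qed
  then obtain G where G: "\<And>\<alpha>. \<alpha> \<in> Poly_Mapping.keys f \<Longrightarrow>
      Poly_Mapping.keys (G \<alpha>) \<subseteq> ?B \<and> Poly_Mapping.single \<alpha> 1 - G \<alpha> \<in> K"
    by metis
  define g where "g = (\<Sum>\<alpha>\<in>Poly_Mapping.keys f. lconst (Poly_Mapping.lookup f \<alpha>) * G \<alpha>)"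
  have "Poly_Mapping.keys (lconst (Poly_Mapping.lookup f \<alpha>) * G \<alpha>) \<subseteq> ?B"
    if "\<alpha> \<in> Poly_Mapping.keys f" for \<alpha>
    using G[OF that] by (auto simp: in_keys_iff)
  then have "Poly_Mapping.keys g \<subseteq> ?B"
    unfolding g_def by (intro order_trans[OF keys_sum]) blast
  moreover have "f - g = (\<Sum>\<alpha>\<in>Poly_Mapping.keys f.
      lconst (Poly_Mapping.lookup f \<alpha>) * (Poly_Mapping.single \<alpha> 1 - G \<alpha>))"
    by (subst (1) lpoly_monomial_expansion[of f]) (simp add: g_def sum_subtractf[symmetric] right_diff_distrib)
  moreover have "\<dots> \<in> K" using G by (intro ideal_sum[OF K] ideal_lconst_mult[OF K]) blast
  ultimately show ?thesis by auto
qed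

end

definition crit_spanning :: "nat \<Rightarrow> lpoly \<Rightarrow> nat \<Rightarrow> bool" where
  "crit_spanning d \<Phi> n \<longleftrightarrow> (\<exists>b::nat \<Rightarrow> lpoly. (\<forall>k<n. b k \<in> ring_d d) \<and>
     (\<forall>f\<in>ring_d d. \<exists>(c::nat \<Rightarrow> complex) (g::nat \<Rightarrow> lpoly).
        (\<forall>j\<le>d. g j \<in> ring_d d) \<and>
        f = (\<Sum>k<n. lconst (c k) * b k) + (\<Sum>j\<le>d. g j * crit_gens d \<Phi> j)))"

lemma crit_degree_eq_Least:
  "finite (crit_points d \<Phi>) \<Longrightarrow> crit_degree d \<Phi> = (LEAST n. crit_spanning d \<Phi> n)"
  by (simp add: crit_degree_def crit_spanning_def)

lemma ex_crit_spanning_if_cong_finite_support: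
  assumes A: "finite A" "\<And>\<alpha>. \<alpha> \<in> A \<Longrightarrow> ring_d_exp d \<alpha>"
    and cong: "\<And>f. f \<in> ring_d d \<Longrightarrow> \<exists>g. Poly_Mapping.keys g \<subseteq> A \<and> f - g \<in> crit_ideal d \<Phi>"
  shows "crit_spanning d \<Phi> (card A)"
proof -
  obtain h where h: "bij_betw h {..<card A} A"
    using ex_bij_betw_nat_finite[OF A(1)] by (auto simp: lessThan_atLeast0)
  define b where "b k = Poly_Mapping.single (h k) (1::complex)" for k
  have b_ring: "\<forall>k<card A. b k \<in> ring_d d"
    unfolding b_def using h A(2) by (auto intro!: ring_d_single dest: bij_betwE)
  have rep: "\<forall>f\<in>ring_d d. \<exists>(c::nat \<Rightarrow> complex) (g'::nat \<Rightarrow> lpoly). (\<forall>j\<le>d. g' j \<in> ring_d d) \<and>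
      f = (\<Sum>k<card A. lconst (c k) * b k) + (\<Sum>j\<le>d. g' j * crit_gens d \<Phi> j)"
  proof
    fix f assume f: "f \<in> ring_d d"
    obtain g where g: "Poly_Mapping.keys g \<subseteq> A" "f - g \<in> crit_ideal d \<Phi>" using cong[OF f] by blast
    then obtain g' where g': "\<forall>j\<le>d. g' j \<in> ring_d d" "f - g = (\<Sum>j\<le>d. g' j * crit_gens d \<Phi> j)"
      unfolding crit_ideal_def by blast
    have "g = (\<Sum>\<alpha>\<in>A. lconst (Poly_Mapping.lookup g \<alpha>) * Poly_Mapping.single \<alpha> 1)"
      by (subst lpoly_monomial_expansion[of g], rule sum.mono_neutral_left) (use g(1) A(1) in \<open>auto simp: in_keys_iff\<close>)
    also have "\<dots> = (\<Sum>k<card A. lconst (Poly_Mapping.lookup g (h k)) * b k)"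
      unfolding b_def by (rule sum.reindex_bij_betw[OF h, symmetric])
    finally have "f = (\<Sum>k<card A. lconst (Poly_Mapping.lookup g (h k)) * b k) + (\<Sum>j\<le>d. g' j * crit_gens d \<Phi> j)"
      using g'(2) by (simp add: algebra_simps flip: g'(2))
    then show "\<exists>(c::nat \<Rightarrow> complex) (g'::nat \<Rightarrow> lpoly). (\<forall>j\<le>d. g' j \<in> ring_d d) \<and>
        f = (\<Sum>k<card A. lconst (c k) * b k) + (\<Sum>j\<le>d. g' j * crit_gens d \<Phi> j)"
      using g'(1) by (intro exI[of _ "\<lambda>k. Poly_Mapping.lookup g (h k)"] exI[of _ g'] conjI)
  qed
  show ?thesis unfolding crit_spanning_def using b_ring rep by (intro exI[of _ b] conjI)
qed

lemma ex_crit_spanning: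
  assumes gens: "\<forall>j\<le>d. crit_gens d \<Phi> j \<in> ring_d d" and fin: "finite (crit_points d \<Phi>)"
  shows "\<exists>n. crit_spanning d \<Phi> n"
proof -
  let ?I = "crit_ideal d \<Phi>"
  have I: "ring_d_ideal d ?I" using ring_d_ideal_crit_ideal[OF gens] .
  have "\<exists>q. k \<le> d \<longrightarrow> q \<noteq> 0 \<and> lpoly_of_poly k q \<in> ?I \<and> (k < d \<longrightarrow> poly q 0 \<noteq> 0)" for k
  proof (cases "k \<le> d")
    case True
    then obtain p where p: "p \<noteq> 0" "lpoly_of_poly k p \<in> ?I"
      using crit_ideal_contains_univariate[OF gens fin] by blast
    show ?thesis
    proof (cases "k < d")
      case True
      then obtain q where "q \<noteq> 0" "lpoly_of_poly k q \<in> ?I" "poly q 0 \<noteq> 0"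
        using univariate_nonvanishing_at_0[OF I p] by blast
      then show ?thesis by blast
    qed (use p in blast)
  qed simp
  then have "\<forall>k. \<exists>q. k \<le> d \<longrightarrow> q \<noteq> 0 \<and> lpoly_of_poly k q \<in> ?I \<and> (k < d \<longrightarrow> poly q 0 \<noteq> 0)" ..
  from choice[OF this] obtain q
    where "\<forall>k. k \<le> d \<longrightarrow> q k \<noteq> 0 \<and> lpoly_of_poly k (q k) \<in> ?I \<and> (k < d \<longrightarrow> poly (q k) 0 \<noteq> 0)"
    by blast
  then have q: "\<And>k. k \<le> d \<Longrightarrow> q k \<noteq> 0 \<and> lpoly_of_poly k (q k) \<in> ?I \<and> (k < d \<longrightarrow> poly (q k) 0 \<noteq> 0)"
    by blast
  let ?B = "degree_box (\<lambda>k. degree (q k)) {..d}"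
  have "crit_spanning d \<Phi> (card ?B)"
  proof (rule ex_crit_spanning_if_cong_finite_support)
    show "finite ?B" by (rule finite_degree_box) simp
    show "\<And>\<alpha>. \<alpha> \<in> ?B \<Longrightarrow> ring_d_exp d \<alpha>" by (rule ring_d_exp_degree_box)
    show "\<And>f. f \<in> ring_d d \<Longrightarrow> \<exists>g. Poly_Mapping.keys g \<subseteq> ?B \<and> f - g \<in> ?I"
      by (rule lpoly_cong_degree_box[OF I q])
  qed
  then show ?thesis ..
qed

section \<open>Specialisation at sign vectors\<close>

definition monomial_sum :: "((nat \<Rightarrow>\<^sub>0 int) \<Rightarrow> complex \<Rightarrow> 'b::comm_monoid_add) \<Rightarrow> lpoly \<Rightarrow> 'b" where
  "monomial_sum \<phi> p = (\<Sum>\<alpha>\<in>Poly_Mapping.keys p. \<phi> \<alpha> (Poly_Mapping.lookup p \<alpha>))"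

locale monomial_hom =
  fixes \<phi> :: "(nat \<Rightarrow>\<^sub>0 int) \<Rightarrow> complex \<Rightarrow> 'b::comm_ring_1" and S :: "(nat \<Rightarrow>\<^sub>0 int) set"
  assumes \<phi>_add: "\<phi> \<alpha> (a + b) = \<phi> \<alpha> a + \<phi> \<alpha> b"
    and \<phi>_mult: "\<alpha> \<in> S \<Longrightarrow> \<beta> \<in> S \<Longrightarrow> \<phi> (\<alpha> + \<beta>) (a * b) = \<phi> \<alpha> a * \<phi> \<beta> b"
    and \<phi>_one: "\<phi> 0 1 = 1"
    and S_zero: "0 \<in> S" and S_add: "\<alpha> \<in> S \<Longrightarrow> \<beta> \<in> S \<Longrightarrow> \<alpha> + \<beta> \<in> S"
begin

lemma \<phi>_zero [simp]: "\<phi> \<alpha> 0 = 0"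
  using \<phi>_add[of \<alpha> 0 0] by simp

lemma \<phi>_uminus: "\<phi> \<alpha> (- a) = - \<phi> \<alpha> a"
  using minus_unique[of "\<phi> \<alpha> a" "\<phi> \<alpha> (- a)"] \<phi>_add[of \<alpha> a "- a"] by simp

lemma monomial_sum_superset:
  assumes "finite T" "Poly_Mapping.keys p \<subseteq> T"
  shows "monomial_sum \<phi> p = (\<Sum>\<alpha>\<in>T. \<phi> \<alpha> (Poly_Mapping.lookup p \<alpha>))"
  unfolding monomial_sum_def using assms by (intro sum.mono_neutral_left) (auto simp: in_keys_iff)

lemma monomial_sum_add: "monomial_sum \<phi> (p + q) = monomial_sum \<phi> p + monomial_sum \<phi> q"
proof -
  let ?T = "Poly_Mapping.keys p \<union> Poly_Mapping.keys q"
  have "monomial_sum \<phi> (p + q) = (\<Sum>\<alpha>\<in>?T. \<phi> \<alpha> (Poly_Mapping.lookup (p + q) \<alpha>))"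
    using keys_add[of p q] by (intro monomial_sum_superset) auto
  also have "\<dots> = (\<Sum>\<alpha>\<in>?T. \<phi> \<alpha> (Poly_Mapping.lookup p \<alpha>)) + (\<Sum>\<alpha>\<in>?T. \<phi> \<alpha> (Poly_Mapping.lookup q \<alpha>))"
    by (simp add: lookup_add \<phi>_add sum.distrib)
  also have "\<dots> = monomial_sum \<phi> p + monomial_sum \<phi> q"
    by (subst (1 2) monomial_sum_superset[of ?T]) auto
  finally show ?thesis .
qed

lemma monomial_sum_0 [simp]: "monomial_sum \<phi> 0 = 0"
  by (simp add: monomial_sum_def)

lemma monomial_sum_uminus: "monomial_sum \<phi> (- p) = - monomial_sum \<phi> p"
  unfolding monomial_sum_def by (simp add: \<phi>_uminus sum_negf)

lemma monomial_sum_diff: "monomial_sum \<phi> (p - q) = monomial_sum \<phi> p - monomial_sum \<phi> q"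
  using monomial_sum_add[of p "- q"] monomial_sum_uminus[of q] by simp

lemma monomial_sum_sum: "monomial_sum \<phi> (\<Sum>i\<in>A. f i) = (\<Sum>i\<in>A. monomial_sum \<phi> (f i))"
  by (induction A rule: infinite_finite_induct) (auto simp: monomial_sum_add)

lemma monomial_sum_single: "monomial_sum \<phi> (Poly_Mapping.single \<alpha> a) = \<phi> \<alpha> a"
  by (cases "a = 0") (simp_all add: monomial_sum_def)

lemma monomial_sum_single_mult:
  assumes "\<alpha> \<in> S" "Poly_Mapping.keys q \<subseteq> S"
  shows "monomial_sum \<phi> (Poly_Mapping.single \<alpha> a * q) = \<phi> \<alpha> a * monomial_sum \<phi> q"
  using assms(2)
proof (induction q rule: update_induct)
  case (update g \<beta> b)
  have upd: "Poly_Mapping.update \<beta> b g = Poly_Mapping.single \<beta> b + g"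
    by (rule update_eq_single_plus[OF update(1)])
  have \<beta>: "\<beta> \<in> S" and g: "Poly_Mapping.keys g \<subseteq> S"
    using update.prems keys_update_nonzero[OF update(1,2)] by auto
  have "monomial_sum \<phi> (Poly_Mapping.single \<alpha> a * Poly_Mapping.update \<beta> b g)
      = monomial_sum \<phi> (Poly_Mapping.single (\<alpha> + \<beta>) (a * b)) + monomial_sum \<phi> (Poly_Mapping.single \<alpha> a * g)"
    by (simp add: upd distrib_left mult_single monomial_sum_add)
  also have "\<dots> = \<phi> \<alpha> a * \<phi> \<beta> b + \<phi> \<alpha> a * monomial_sum \<phi> g"
    using update.IH[OF g] by (simp add: monomial_sum_single \<phi>_mult[OF assms(1) \<beta>])
  also have "\<dots> = \<phi> \<alpha> a * monomial_sum \<phi> (Poly_Mapping.update \<beta> b g)"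
    by (simp add: upd monomial_sum_add monomial_sum_single distrib_left)
  finally show ?case .
qed simp

lemma monomial_sum_mult:
  assumes "Poly_Mapping.keys p \<subseteq> S" "Poly_Mapping.keys q \<subseteq> S"
  shows "monomial_sum \<phi> (p * q) = monomial_sum \<phi> p * monomial_sum \<phi> q"
  using assms(1)
proof (induction p rule: update_induct)
  case (update f \<alpha> a)
  have upd: "Poly_Mapping.update \<alpha> a f = Poly_Mapping.single \<alpha> a + f"
    by (rule update_eq_single_plus[OF update(1)])
  have \<alpha>: "\<alpha> \<in> S" and f: "Poly_Mapping.keys f \<subseteq> S"
    using update.prems keys_update_nonzero[OF update(1,2)] by auto
  have "monomial_sum \<phi> (Poly_Mapping.update \<alpha> a f * q)
      = monomial_sum \<phi> (Poly_Mapping.single \<alpha> a * q) + monomial_sum \<phi> (f * q)"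
    by (simp add: upd distrib_right monomial_sum_add)
  also have "\<dots> = \<phi> \<alpha> a * monomial_sum \<phi> q + monomial_sum \<phi> f * monomial_sum \<phi> q"
    using monomial_sum_single_mult[OF \<alpha> assms(2)] update.IH[OF f] by simp
  also have "\<dots> = monomial_sum \<phi> (Poly_Mapping.update \<alpha> a f) * monomial_sum \<phi> q"
    by (simp add: upd monomial_sum_add monomial_sum_single distrib_right)
  finally show ?case .
qed simp

lemma monomial_sum_1 [simp]: "monomial_sum \<phi> 1 = 1"
  using monomial_sum_single[of 0 1] by (simp add: \<phi>_one)

lemma keys_prod_subset:
  assumes "\<And>i. i \<in> A \<Longrightarrow> Poly_Mapping.keys (f i) \<subseteq> S"
  shows "Poly_Mapping.keys (\<Prod>i\<in>A. f i) \<subseteq> S"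
  using assms
proof (induction A rule: infinite_finite_induct)
  case (insert i A)
  have "Poly_Mapping.keys (f i * (\<Prod>i\<in>A. f i))
      \<subseteq> {a + b |a b. a \<in> Poly_Mapping.keys (f i) \<and> b \<in> Poly_Mapping.keys (\<Prod>i\<in>A. f i)}"
    by (rule keys_mult)
  also have "\<dots> \<subseteq> S" using insert by (auto intro: S_add)
  finally show ?case using insert by simp
qed (simp_all add: S_zero)

lemma monomial_sum_prod:
  assumes "\<And>i. i \<in> A \<Longrightarrow> Poly_Mapping.keys (f i) \<subseteq> S"
  shows "monomial_sum \<phi> (\<Prod>i\<in>A. f i) = (\<Prod>i\<in>A. monomial_sum \<phi> (f i))"
  using assms
  by (induction A rule: infinite_finite_induct) (simp_all add: monomial_sum_mult keys_prod_subset)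

end

text \<open>The substitution \<open>z \<mapsto> z\<^sup>-\<^sup>1\<close>, fixing \<open>\<lambda>\<close>, on exponents and on Laurent polynomials.\<close>
definition zinv_exp :: "nat \<Rightarrow> (nat \<Rightarrow>\<^sub>0 int) \<Rightarrow> (nat \<Rightarrow>\<^sub>0 int)" where
  "zinv_exp d \<alpha> = (\<Sum>i\<in>Poly_Mapping.keys \<alpha>.
     Poly_Mapping.single i (if i < d then - Poly_Mapping.lookup \<alpha> i else Poly_Mapping.lookup \<alpha> i))"

lemma lookup_zinv_exp:
  "Poly_Mapping.lookup (zinv_exp d \<alpha>) j = (if j < d then - Poly_Mapping.lookup \<alpha> j else Poly_Mapping.lookup \<alpha> j)"
  unfolding zinv_exp_def by (simp add: lookup_sum lookup_single when_def in_keys_iff)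

lemma zinv_exp_add: "zinv_exp d (\<alpha> + \<beta>) = zinv_exp d \<alpha> + zinv_exp d \<beta>"
  by (rule poly_mapping_eqI) (simp add: lookup_zinv_exp lookup_add)

lemma zinv_exp_zinv_exp [simp]: "zinv_exp d (zinv_exp d \<alpha>) = \<alpha>"
  by (rule poly_mapping_eqI) (simp add: lookup_zinv_exp)

lemma zinv_exp_0 [simp]: "zinv_exp d 0 = 0"
  by (rule poly_mapping_eqI) (simp add: lookup_zinv_exp)

lemma zinv_exp_lattice: "\<alpha> \<in> lattice d \<Longrightarrow> zinv_exp d \<alpha> = - \<alpha>"
  by (rule poly_mapping_eqI) (auto simp: lookup_zinv_exp lattice_def in_keys_iff)

definition zinv :: "nat \<Rightarrow> lpoly \<Rightarrow> lpoly" where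
  "zinv d = monomial_sum (\<lambda>\<alpha> a. Poly_Mapping.single (zinv_exp d \<alpha>) a)"

lemma monomial_hom_zinv: "monomial_hom (\<lambda>\<alpha> a. Poly_Mapping.single (zinv_exp d \<alpha>) (a::complex)) UNIV"
  by unfold_locales (simp_all add: single_add mult_single zinv_exp_add)

lemma lookup_zinv: "Poly_Mapping.lookup (zinv d p) \<beta> = Poly_Mapping.lookup p (zinv_exp d \<beta>)"
proof -
  have "Poly_Mapping.lookup (zinv d p) \<beta> = (\<Sum>\<alpha>\<in>Poly_Mapping.keys p.
      (if \<alpha> = zinv_exp d \<beta> then Poly_Mapping.lookup p \<alpha> else 0))"
    unfolding zinv_def monomial_sum_def
    by (intro trans[OF lookup_sum] sum.cong refl) (auto simp: lookup_single when_def)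
  also have "\<dots> = Poly_Mapping.lookup p (zinv_exp d \<beta>)"
    by (simp add: in_keys_iff)
  finally show ?thesis .
qed

lemma zinv_diff: "zinv d (p - q) = zinv d p - zinv d q"
  unfolding zinv_def by (rule monomial_hom.monomial_sum_diff[OF monomial_hom_zinv])

lemma zinv_sum: "zinv d (\<Sum>i\<in>A. f i) = (\<Sum>i\<in>A. zinv d (f i))"
  unfolding zinv_def by (rule monomial_hom.monomial_sum_sum[OF monomial_hom_zinv])

lemma zinv_mult: "zinv d (p * q) = zinv d p * zinv d q"
  unfolding zinv_def by (rule monomial_hom.monomial_sum_mult[OF monomial_hom_zinv]) auto

lemma zinv_prod: "zinv d (\<Prod>i\<in>A. f i) = (\<Prod>i\<in>A. zinv d (f i))"
  unfolding zinv_def by (rule monomial_hom.monomial_sum_prod[OF monomial_hom_zinv]) auto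

lemma zinv_single: "zinv d (Poly_Mapping.single \<alpha> a) = Poly_Mapping.single (zinv_exp d \<alpha>) a"
  unfolding zinv_def by (rule monomial_hom.monomial_sum_single[OF monomial_hom_zinv])

lemma zinv_of_int: "zinv d (of_int c) = of_int c"
  using zinv_single[of d 0 "of_int c"] by (simp add: single_of_int zinv_exp_def)

lemma zinv_lconst: "zinv d (lconst c) = lconst c"
  unfolding lconst_def by (simp add: zinv_single zinv_exp_def)

lemma zinv_lvar_d: "zinv d (lvar d) = lvar d"
proof -
  have "zinv_exp d (Poly_Mapping.single d 1) = Poly_Mapping.single d 1"
    by (rule poly_mapping_eqI) (simp add: lookup_zinv_exp lookup_single when_def)
  then show ?thesis unfolding lvar_def by (simp add: zinv_single)
qed

lemma zinv_0 [simp]: "zinv d 0 = 0"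
  by (simp add: zinv_def monomial_sum_def)

lemma lookup_zdz:
  "Poly_Mapping.lookup (zdz i p) \<beta> = of_int (Poly_Mapping.lookup \<beta> i) * Poly_Mapping.lookup p \<beta>"
  unfolding zdz_def by (simp add: lookup_sum lookup_single when_def in_keys_iff)

lemma zdz_zinv: "i < d \<Longrightarrow> zdz i (zinv d p) = - zinv d (zdz i p)"
  by (rule poly_mapping_eqI) (simp add: lookup_zdz lookup_zinv lookup_zinv_exp)

lemma ring_d_zdz: "p \<in> ring_d d \<Longrightarrow> zdz i p \<in> ring_d d"
  unfolding zdz_def by (intro ring_d_sum ring_d_single) (auto simp: ring_d_iff)

definition sign_weight :: "nat set \<Rightarrow> (nat \<Rightarrow>\<^sub>0 int) \<Rightarrow> complex" where
  "sign_weight B \<alpha> = (\<Prod>i\<in>B. (-1) powi Poly_Mapping.lookup \<alpha> i)"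

lemma sign_weight_add: "sign_weight B (\<alpha> + \<beta>) = sign_weight B \<alpha> * sign_weight B \<beta>"
  unfolding sign_weight_def by (simp add: lookup_add power_int_add prod.distrib)

lemma sign_weight_zinv_exp: "B \<subseteq> {..<d} \<Longrightarrow> sign_weight B (zinv_exp d \<alpha>) = sign_weight B \<alpha>"
  unfolding sign_weight_def
  by (intro prod.cong refl) (auto simp: lookup_zinv_exp power_int_minus power_int_inverse[symmetric])

lemma sign_weight_single:
  assumes "finite B"
  shows "sign_weight B (Poly_Mapping.single i t) = (if i \<in> B then (-1) powi t else 1)"
proof -
  have "sign_weight B (Poly_Mapping.single i t) = (\<Prod>j\<in>B. if j = i then (-1) powi t else 1)"
    unfolding sign_weight_def by (intro prod.cong refl) (simp add: lookup_single when_def)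
  then show ?thesis using assms by (simp add: prod.delta)
qed

text \<open>\<open>sign_spec d B p\<close> is \<open>p(\<sigma>, \<lambda>)\<close> for the sign vector \<open>\<sigma>\<^sub>i = -1\<close> on \<open>B\<close> and \<open>+1\<close> elsewhere,
  a polynomial in \<open>\<lambda>\<close> (meaningful for \<open>p \<in> ring_d d\<close>).\<close>
definition sign_spec :: "nat \<Rightarrow> nat set \<Rightarrow> lpoly \<Rightarrow> complex poly" where
  "sign_spec d B = monomial_sum (\<lambda>\<alpha> a. monom (a * sign_weight B \<alpha>) (nat (Poly_Mapping.lookup \<alpha> d)))"

lemma monomial_hom_sign_spec:
  "monomial_hom (\<lambda>\<alpha> a. monom (a * sign_weight B \<alpha>) (nat (Poly_Mapping.lookup \<alpha> d))) {\<alpha>. ring_d_exp d \<alpha>}"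
proof unfold_locales
  fix \<alpha> \<beta> a b assume "\<alpha> \<in> {\<alpha>. ring_d_exp d \<alpha>}" "\<beta> \<in> {\<alpha>. ring_d_exp d \<alpha>}"
  then have "0 \<le> Poly_Mapping.lookup \<alpha> d" "0 \<le> Poly_Mapping.lookup \<beta> d" by (auto simp: ring_d_exp_def)
  then show "monom (a * b * sign_weight B (\<alpha> + \<beta>)) (nat (Poly_Mapping.lookup (\<alpha> + \<beta>) d)) =
     monom (a * sign_weight B \<alpha>) (nat (Poly_Mapping.lookup \<alpha> d)) *
     monom (b * sign_weight B \<beta>) (nat (Poly_Mapping.lookup \<beta> d))"
    by (simp add: sign_weight_add lookup_add nat_add_distrib mult_monom algebra_simps)
qed (auto simp: distrib_right add_monom sign_weight_def monom_0 one_pCons intro: ring_d_exp_add)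

context
  fixes d :: nat and B :: "nat set"
begin

interpretation spec: monomial_hom "\<lambda>\<alpha> a. monom (a * sign_weight B \<alpha>) (nat (Poly_Mapping.lookup \<alpha> d))"
    "{\<alpha>. ring_d_exp d \<alpha>}"
  by (rule monomial_hom_sign_spec)

lemma sign_spec_0 [simp]: "sign_spec d B 0 = 0"
  unfolding sign_spec_def by (rule spec.monomial_sum_0)

lemma sign_spec_add: "sign_spec d B (p + q) = sign_spec d B p + sign_spec d B q"
  unfolding sign_spec_def by (rule spec.monomial_sum_add)

lemma sign_spec_diff: "sign_spec d B (p - q) = sign_spec d B p - sign_spec d B q"
  unfolding sign_spec_def by (rule spec.monomial_sum_diff)

lemma sign_spec_uminus: "sign_spec d B (- p) = - sign_spec d B p"
  unfolding sign_spec_def by (rule spec.monomial_sum_uminus)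

lemma sign_spec_sum: "sign_spec d B (\<Sum>i\<in>A. f i) = (\<Sum>i\<in>A. sign_spec d B (f i))"
  unfolding sign_spec_def by (rule spec.monomial_sum_sum)

lemma sign_spec_mult:
  "p \<in> ring_d d \<Longrightarrow> q \<in> ring_d d \<Longrightarrow> sign_spec d B (p * q) = sign_spec d B p * sign_spec d B q"
  unfolding sign_spec_def by (rule spec.monomial_sum_mult) (auto simp: ring_d_iff)

lemma sign_spec_prod:
  "(\<And>i. i \<in> A \<Longrightarrow> f i \<in> ring_d d) \<Longrightarrow> sign_spec d B (\<Prod>i\<in>A. f i) = (\<Prod>i\<in>A. sign_spec d B (f i))"
  unfolding sign_spec_def by (rule spec.monomial_sum_prod) (auto simp: ring_d_iff)

lemma sign_spec_single:
  "sign_spec d B (Poly_Mapping.single \<alpha> a) = monom (a * sign_weight B \<alpha>) (nat (Poly_Mapping.lookup \<alpha> d))"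
  unfolding sign_spec_def by (rule spec.monomial_sum_single)

lemma sign_spec_lconst: "sign_spec d B (lconst c) = [:c:]"
  unfolding lconst_def by (simp add: sign_spec_single monom_0 sign_weight_def)

lemma sign_spec_of_int: "sign_spec d B (of_int c) = of_int c"
  using sign_spec_lconst[of "of_int c"] unfolding lconst_def by (simp add: single_of_int of_int_poly)

lemma sign_spec_lvar_d: "B \<subseteq> {..<d} \<Longrightarrow> sign_spec d B (lvar d) = [:0, 1:]"
  unfolding lvar_def using finite_subset[of B "{..<d}"]
  by (auto simp: sign_spec_single sign_weight_single monom_Suc)

lemma sign_spec_lvar: "B \<subseteq> {..<d} \<Longrightarrow> i < d \<Longrightarrow> sign_spec d B (lvar i) = [:if i \<in> B then -1 else 1:]"
  unfolding lvar_def using finite_subset[of B "{..<d}"]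
  by (simp add: sign_spec_single sign_weight_single monom_0 lookup_single when_def)

lemma sign_spec_zinv:
  assumes B: "B \<subseteq> {..<d}"
  shows "sign_spec d B (zinv d p) = sign_spec d B p"
proof -
  let ?\<phi> = "\<lambda>\<alpha> a. monom (a * sign_weight B \<alpha>) (nat (Poly_Mapping.lookup \<alpha> d))"
  have keys: "Poly_Mapping.keys (zinv d p) = zinv_exp d ` Poly_Mapping.keys p"
  proof (intro equalityI subsetI)
    fix \<beta> assume "\<beta> \<in> Poly_Mapping.keys (zinv d p)"
    then have "zinv_exp d \<beta> \<in> Poly_Mapping.keys p" by (simp add: in_keys_iff lookup_zinv)
    then show "\<beta> \<in> zinv_exp d ` Poly_Mapping.keys p" by (intro image_eqI[of _ _ "zinv_exp d \<beta>"]) auto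
  qed (auto simp: in_keys_iff lookup_zinv)
  have inj: "inj_on (zinv_exp d) (Poly_Mapping.keys p)" by (metis inj_onI zinv_exp_zinv_exp)
  have "sign_spec d B (zinv d p)
      = (\<Sum>\<alpha>\<in>Poly_Mapping.keys p. ?\<phi> (zinv_exp d \<alpha>) (Poly_Mapping.lookup p \<alpha>))"
    unfolding sign_spec_def monomial_sum_def keys by (simp add: sum.reindex[OF inj] lookup_zinv)
  also have "\<dots> = sign_spec d B p"
    unfolding sign_spec_def monomial_sum_def using B
    by (intro sum.cong refl) (simp add: sign_weight_zinv_exp lookup_zinv_exp)
  finally show ?thesis .
qed

text \<open>For \<open>z\<^sub>i \<partial>\<^sub>i \<Phi>\<close> with \<open>\<Phi>\<close> invariant under \<open>z \<mapsto> z\<^sup>-\<^sup>1\<close>: the substitution negates it but fixes its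
  values at sign vectors.\<close>
lemma sign_spec_zdz_eq_0:
  assumes B: "B \<subseteq> {..<d}" and i: "i < d" and sym: "zinv d \<Phi> = \<Phi>"
  shows "sign_spec d B (zdz i \<Phi>) = 0"
proof -
  have "sign_spec d B (zdz i \<Phi>) = sign_spec d B (zdz i (zinv d \<Phi>))" using sym by simp
  also have "\<dots> = - sign_spec d B (zdz i \<Phi>)"
    by (simp add: zdz_zinv[OF i] sign_spec_uminus sign_spec_zinv[OF B])
  finally have "sign_spec d B (zdz i \<Phi>) + sign_spec d B (zdz i \<Phi>) = 0"
    by (metis add.right_inverse)
  then have "smult 2 (sign_spec d B (zdz i \<Phi>)) = 0" by (simp add: smult_add_left[symmetric])
  then show ?thesis by simp
qed

end

section \<open>The dispersion polynomial\<close>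

lemma det_on_transpose:
  assumes W: "finite W"
  shows "det_on W (\<lambda>v u. M u v) = det_on W M"
proof -
  let ?P = "{p. p permutes W}"
  have prod_inv: "(\<Prod>v\<in>W. M (p v) v) = (\<Prod>w\<in>W. M w (inv p w))" if p: "p permutes W" for p
    using prod.reindex_bij_betw[OF permutes_imp_bij[OF p], of "\<lambda>w. M w (inv p w)"]
    by (simp add: permutes_inverses(2)[OF p])
  have sign_inv: "sign (inv p) = sign p" if "p permutes W" for p
  proof -
    have "permutation p" using W that permutation_permutes by blast
    then show ?thesis by (rule sign_inverse)
  qed
  have "det_on W (\<lambda>v u. M u v) = (\<Sum>p\<in>?P. of_int (sign (inv p)) * (\<Prod>w\<in>W. M w (inv p w)))"
    unfolding det_on_def by (intro sum.cong refl) (simp add: prod_inv sign_inv)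
  also have "\<dots> = det_on W M"
    unfolding det_on_def
    by (rule sum.reindex_bij_betw) (auto intro!: bij_betwI[where g = inv] simp: permutes_inv permutes_inv_inv)
  finally show ?thesis .
qed

text \<open>Only the identity permutation reaches degree \<open>|W|\<close>: every other one has a non-diagonal,
  hence constant, factor.\<close>
lemma coeff_det_on_char_matrix:
  fixes N :: "'v \<Rightarrow> 'v \<Rightarrow> complex poly"
  assumes W: "finite W" and N: "\<And>v u. degree (N v u) = 0"
  shows "coeff (det_on W (\<lambda>v u. (if v = u then [:0, 1:] else 0) - N v u)) (card W) = 1"
proof -
  let ?A = "\<lambda>v u. (if v = u then [:0, 1:] else 0) - N v u"
  let ?P = "{p. p permutes W}"
  let ?T = "\<lambda>p. of_int (sign p) * (\<Prod>v\<in>W. ?A v (p v))"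
  have diag: "[:0, 1:] - N v v = [:- coeff (N v v) 0, 1:]" for v
    using N[of v v] by (subst degree_0_id[symmetric]) auto
  have "coeff (?T id) (card W) = 1"
  proof -
    have "?T id = (\<Prod>v\<in>W. [:- coeff (N v v) 0, 1:])" by (simp add: diag)
    moreover have "degree (\<Prod>v\<in>W. [:- coeff (N v v) 0, 1:]) = card W"
      by (subst degree_prod_eq_sum_degree) auto
    moreover have "lead_coeff (\<Prod>v\<in>W. [:- coeff (N v v) 0, 1:]) = 1"
      by (simp add: lead_coeff_prod)
    ultimately show ?thesis by simp
  qed
  moreover have "coeff (?T p) (card W) = 0" if p: "p \<in> ?P - {id}" for p
  proof -
    obtain v0 where v0: "v0 \<in> W" "p v0 \<noteq> v0"
      using p permutes_not_in[of p W] by (metis DiffE id_apply mem_Collect_eq singletonI ext)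
    have "degree (?A v (p v)) \<le> (if p v = v then 1 else 0)" for v
      using diag[of v] N[of v "p v"] by auto
    then have "degree (\<Prod>v\<in>W. ?A v (p v)) \<le> (\<Sum>v\<in>W. if p v = v then 1 else 0)"
      by (intro order_trans[OF degree_prod_sum_le[OF W]] sum_mono) (simp add: o_def)
    also have "\<dots> < (\<Sum>v\<in>W. 1)"
      using v0 W by (intro sum_strict_mono_ex1) auto
    finally have "degree (?T p) < card W" by (simp add: of_int_poly)
    then show ?thesis by (rule coeff_eq_0)
  qed
  then have "coeff (\<Sum>p\<in>?P - {id}. ?T p) (card W) = 0"
    by (simp add: coeff_sum)
  moreover have "det_on W ?A = ?T id + (\<Sum>p\<in>?P - {id}. ?T p)"
    unfolding det_on_def using finite_permutations[OF W] by (intro sum.remove) auto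
  ultimately show ?thesis by simp
qed

lemma lookup_lattice_d: "\<alpha> \<in> lattice d \<Longrightarrow> Poly_Mapping.lookup \<alpha> d = 0"
  by (auto simp: lattice_def in_keys_iff)

lemma ring_d_det_on: "(\<And>v u. M v u \<in> ring_d d) \<Longrightarrow> det_on W M \<in> ring_d d"
  unfolding det_on_def by (intro ring_d_sum ring_d_mult ring_d_of_int ring_d_prod) auto

lemma ring_d_floquet: "floquet d act adj e V v u \<in> ring_d d"
  unfolding floquet_def
  by (intro ring_d_diff ring_d_sum ring_d_single)
    (auto simp: ring_d_exp_def lookup_lattice_d, auto simp: lattice_def)

lemma ring_d_char_matrix: "(if v = u then lvar d else 0) - floquet d act adj e V v u \<in> ring_d d"
  by (intro ring_d_diff ring_d_floquet) (simp add: ring_d_lvar)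

lemma ring_d_dispersion: "dispersion d act adj e V W \<in> ring_d d"
  unfolding dispersion_def by (intro ring_d_det_on ring_d_char_matrix)

lemma ring_d_crit_gens: "\<Phi> \<in> ring_d d \<Longrightarrow> crit_gens d \<Phi> j \<in> ring_d d"
  unfolding crit_gens_def by (auto intro: ring_d_zdz)

lemma zinv_det_on: "zinv d (det_on W M) = det_on W (\<lambda>v u. zinv d (M v u))"
  unfolding det_on_def by (simp add: zinv_sum zinv_mult zinv_of_int zinv_prod)

lemma sign_spec_det_on:
  assumes "\<And>v u. M v u \<in> ring_d d"
  shows "sign_spec d B (det_on W M) = det_on W (\<lambda>v u. sign_spec d B (M v u))"
  unfolding det_on_def sign_spec_sum using assms
  by (intro sum.cong refl) (simp add: sign_spec_mult ring_d_prod sign_spec_of_int sign_spec_prod)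

lemma uminus_lattice: "\<alpha> \<in> lattice d \<Longrightarrow> - \<alpha> \<in> lattice d"
  by (simp add: lattice_def)

context
  fixes d act adj e V
  assumes graph: "periodic_graph d act adj" and operator: "periodic_operator d act e V"
begin

lemma act_uminus_cancel:
  assumes "\<alpha> \<in> lattice d"
  shows "act \<alpha> (act (- \<alpha>) x) = x"
proof -
  have "act (\<alpha> + - \<alpha>) x = act \<alpha> (act (- \<alpha>) x)"
    using graph assms uminus_lattice[OF assms] unfolding periodic_graph_def by blast
  moreover have "act 0 x = x" using graph unfolding periodic_graph_def by blast
  ultimately show ?thesis by simp
qed

lemma adj_act_uminus:
  assumes "\<alpha> \<in> lattice d" "adj v (act \<alpha> u)"
  shows "adj u (act (- \<alpha>) v)"
proof -
  have "adj (act \<alpha> u) (act \<alpha> (act (- \<alpha>) v)) = adj u (act (- \<alpha>) v)"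
    using graph assms(1) unfolding periodic_graph_def by blast
  moreover have "adj (act \<alpha> u) v" using graph assms(2) unfolding periodic_graph_def by blast
  ultimately show ?thesis by (simp add: act_uminus_cancel[OF assms(1)])
qed

lemma weight_act_uminus:
  assumes "\<alpha> \<in> lattice d"
  shows "e u (act (- \<alpha>) v) = e v (act \<alpha> u)"
proof -
  have "e (act \<alpha> u) (act \<alpha> (act (- \<alpha>) v)) = e u (act (- \<alpha>) v)"
    using operator assms unfolding periodic_operator_def by blast
  moreover have "e (act \<alpha> u) v = e v (act \<alpha> u)" using operator unfolding periodic_operator_def by blast
  ultimately show ?thesis by (simp add: act_uminus_cancel[OF assms])
qed

text \<open>The Floquet matrix satisfies \<open>H(z\<^sup>-\<^sup>1) = H(z)\<^sup>T\<close>: reindex the sum by \<open>\<alpha> \<mapsto> -\<alpha>\<close>.\<close>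
lemma zinv_floquet: "zinv d (floquet d act adj e V v u) = floquet d act adj e V u v"
proof -
  define A where "A x y = {\<alpha> \<in> lattice d. adj x (act \<alpha> y)}" for x y
  have "(\<Sum>\<alpha>\<in>A v u. Poly_Mapping.single (zinv_exp d \<alpha>) (complex_of_real (e v (act \<alpha> u))))
      = (\<Sum>\<beta>\<in>A u v. Poly_Mapping.single \<beta> (complex_of_real (e u (act \<beta> v))))"
  proof (rule sum.reindex_bij_witness[where i = uminus and j = uminus])
    fix \<alpha> assume "\<alpha> \<in> A v u"
    then show "- \<alpha> \<in> A u v"
      and "Poly_Mapping.single (- \<alpha>) (complex_of_real (e u (act (- \<alpha>) v)))
        = Poly_Mapping.single (zinv_exp d \<alpha>) (complex_of_real (e v (act \<alpha> u)))"
      by (auto simp: A_def uminus_lattice adj_act_uminus zinv_exp_lattice weight_act_uminus)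
  next
    fix \<beta> assume "\<beta> \<in> A u v"
    then show "- \<beta> \<in> A v u" using adj_act_uminus by (auto simp: A_def uminus_lattice)
  qed simp_all
  then show ?thesis
    unfolding floquet_def A_def[symmetric] by (simp add: zinv_diff zinv_sum zinv_single zinv_lconst)
qed

lemma zinv_dispersion:
  assumes "finite W"
  shows "zinv d (dispersion d act adj e V W) = dispersion d act adj e V W"
proof -
  let ?M = "\<lambda>v u. (if v = u then lvar d else 0) - floquet d act adj e V v u"
  have "zinv d (?M v u) = ?M u v" for v u
    by (simp add: zinv_diff zinv_floquet zinv_lvar_d)
  then have "zinv d (dispersion d act adj e V W) = det_on W (\<lambda>v u. ?M u v)"
    unfolding dispersion_def zinv_det_on by simp
  also have "\<dots> = dispersion d act adj e V W"
    unfolding dispersion_def by (rule det_on_transpose[OF assms])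
  finally show ?thesis .
qed

end

lemma degree_sign_spec_floquet: "degree (sign_spec d B (floquet d act adj e V v u)) = 0"
proof -
  have "degree (sign_spec d B (Poly_Mapping.single \<alpha> c)) = 0" if "\<alpha> \<in> lattice d" for \<alpha> c
    using lookup_lattice_d[OF that] by (simp add: sign_spec_single monom_0)
  then have "degree (\<Sum>\<alpha>\<in>{\<alpha> \<in> lattice d. adj v (act \<alpha> u)}.
      sign_spec d B (Poly_Mapping.single \<alpha> (complex_of_real (e v (act \<alpha> u))))) = 0"
    by (cases "finite {\<alpha> \<in> lattice d. adj v (act \<alpha> u)}")
      (auto intro!: degree_sum_le[THEN le_zero_eq[THEN iffD1]])
  then show ?thesis
    unfolding floquet_def sign_spec_diff sign_spec_sum
    by (intro degree_diff_le[THEN le_zero_eq[THEN iffD1]]) (auto simp: sign_spec_lconst)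
qed

text \<open>At every sign vector, \<open>\<Phi>(\<sigma>, \<lambda>)\<close> is the characteristic polynomial of the constant matrix
  \<open>H(\<sigma>)\<close>, monic of degree \<open>|W|\<close>.\<close>
lemma coeff_sign_spec_dispersion:
  assumes W: "finite W" and B: "B \<subseteq> {..<d}"
  shows "coeff (sign_spec d B (dispersion d act adj e V W)) (card W) = 1"
proof -
  have "sign_spec d B ((if v = u then lvar d else 0) - floquet d act adj e V v u)
      = (if v = u then [:0, 1:] else 0) - sign_spec d B (floquet d act adj e V v u)" for v u
    by (simp add: sign_spec_diff sign_spec_lvar_d[OF B])
  then show ?thesis
    unfolding dispersion_def sign_spec_det_on[OF ring_d_char_matrix]
    by (simp add: coeff_det_on_char_matrix[OF W degree_sign_spec_floquet])
qed

section \<open>The lower bound\<close>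

definition sign_indicator :: "nat \<Rightarrow> nat set \<Rightarrow> lpoly" where
  "sign_indicator d B = (\<Prod>i<d. lconst (1/2) * (1 + lconst (if i \<in> B then -1 else 1) * lvar i))"

definition sign_test :: "nat \<Rightarrow> nat set \<Rightarrow> nat \<Rightarrow> lpoly" where
  "sign_test d B k = sign_indicator d B * Poly_Mapping.single (Poly_Mapping.single d (int k)) 1"

lemma ring_d_sign_indicator: "sign_indicator d B \<in> ring_d d"
  unfolding sign_indicator_def by (intro ring_d_prod ring_d_mult ring_d_add ring_d_lvar) auto

lemma ring_d_sign_test: "sign_test d B k \<in> ring_d d"
  unfolding sign_test_def
  by (intro ring_d_mult ring_d_sign_indicator ring_d_single ring_d_exp_single) auto

lemma sign_spec_sign_indicator:
  assumes B: "B \<subseteq> {..<d}" and B': "B' \<subseteq> {..<d}"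
  shows "sign_spec d B' (sign_indicator d B) = (if B = B' then 1 else 0)"
proof -
  have factor: "sign_spec d B' (lconst (1/2) * (1 + lconst (if i \<in> B then -1 else 1) * lvar i))
      = (if (i \<in> B) = (i \<in> B') then 1 else 0)" if "i < d" for i
    using that B'
    by (simp add: sign_spec_mult sign_spec_add sign_spec_lconst sign_spec_lvar ring_d_lvar ring_d_add
        ring_d_mult sign_spec_lconst[of d B' 1, simplified] one_pCons)
  have "sign_spec d B' (sign_indicator d B) = (\<Prod>i<d. if (i \<in> B) = (i \<in> B') then 1 else 0)"
    unfolding sign_indicator_def
    by (subst sign_spec_prod) (auto intro!: ring_d_mult ring_d_add ring_d_diff ring_d_lvar prod.cong factor)
  also have "\<dots> = (if B = B' then 1 else 0)"
  proof (cases "B = B'")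
    case False
    then obtain i where "(i \<in> B) \<noteq> (i \<in> B')" by blast
    moreover then have "i < d" using B B' by auto
    ultimately show ?thesis using False by (intro trans[OF prod_zero]) auto
  qed simp
  finally show ?thesis .
qed

lemma sign_spec_sign_test:
  assumes B: "B \<subseteq> {..<d}" and B': "B' \<subseteq> {..<d}"
  shows "sign_spec d B' (sign_test d B k) = (if B = B' then monom 1 k else 0)"
proof -
  have "sign_weight B' (Poly_Mapping.single d (int k)) = 1"
    using B' finite_subset[of B' "{..<d}"] by (auto simp: sign_weight_single)
  then show ?thesis unfolding sign_test_def
    by (subst sign_spec_mult)
      (auto intro!: ring_d_sign_indicator ring_d_single ring_d_exp_single
        simp: sign_spec_sign_indicator[OF B B'] sign_spec_single)
qed

interpretation fun_space: vector_space "\<lambda>(c::complex) (f::nat set \<times> nat \<Rightarrow> complex) x. c * f x"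
  by unfold_locales (simp_all add: fun_eq_iff algebra_simps)

lemma sum_fun_apply: "(\<Sum>i\<in>A. f i) x = (\<Sum>i\<in>A. f i x)"
  by (induction A rule: infinite_finite_induct) auto

lemma fun_space_independent_indicators:
  "fun_space.independent ((\<lambda>e x. if x = e then 1 else 0 :: complex) ` A)"
  unfolding fun_space.independent_explicit_module
proof (intro allI impI)
  fix T :: "(nat set \<times> nat \<Rightarrow> complex) set" and u v
  assume T: "finite T" "T \<subseteq> (\<lambda>e x. if x = e then 1 else 0) ` A"
    "(\<Sum>w\<in>T. (\<lambda>x. u w * w x)) = 0" "v \<in> T"
  then obtain e where v: "v = (\<lambda>x. if x = e then 1 else 0)" by blast
  have others: "w e = 0" if "w \<in> T - {v}" for w
    using that T(2) v by auto
  have "(\<Sum>w\<in>T - {v}. u w * w e) = 0" by (intro sum.neutral ballI) (simp add: others)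
  then have "(\<Sum>w\<in>T. u w * w e) = u v"
    using T(1,4) v by (simp add: sum.remove)
  moreover have "(\<Sum>w\<in>T. u w * w e) = 0"
    using fun_cong[OF T(3), of e] by (simp add: sum_fun_apply)
  ultimately show "u v = 0" by simp
qed

definition sign_index :: "nat \<Rightarrow> nat \<Rightarrow> (nat set \<times> nat) set" where
  "sign_index d n = Pow {..<d} \<times> {..<n}"

lemma card_sign_index: "card (sign_index d n) = 2 ^ d * n"
  unfolding sign_index_def by (simp add: card_cartesian_product card_Pow)

text \<open>The image of \<open>f\<close> in \<open>\<Prod>\<^sub>\<sigma> \<complex>[\<lambda>]/(\<Phi>(\<sigma>, \<lambda>))\<close> over the \<open>2\<^sup>d\<close> sign vectors \<open>\<sigma>\<close>, recorded
  by the first \<open>n\<close> coefficients of the remainders.\<close>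
definition sign_remainders :: "nat \<Rightarrow> lpoly \<Rightarrow> nat \<Rightarrow> lpoly \<Rightarrow> nat set \<times> nat \<Rightarrow> complex" where
  "sign_remainders d \<Phi> n f = (\<lambda>(B, k). if (B, k) \<in> sign_index d n
     then coeff (sign_spec d B f mod sign_spec d B \<Phi>) k else 0)"

lemma sign_remainders_add:
  "sign_remainders d \<Phi> n (f + g) = sign_remainders d \<Phi> n f + sign_remainders d \<Phi> n g"
  unfolding sign_remainders_def by (auto simp: fun_eq_iff sign_spec_add poly_mod_add_left)

lemma sign_remainders_sum:
  "sign_remainders d \<Phi> n (\<Sum>i\<in>A. f i) = (\<Sum>i\<in>A. sign_remainders d \<Phi> n (f i))"
proof (induction A rule: infinite_finite_induct)
  case (infinite A)
  then show ?case by (simp add: sign_remainders_def fun_eq_iff)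
next
  case empty
  then show ?case by (simp add: sign_remainders_def fun_eq_iff)
qed (simp add: sign_remainders_add)

lemma sign_remainders_lconst_mult:
  "f \<in> ring_d d \<Longrightarrow> sign_remainders d \<Phi> n (lconst c * f) = (\<lambda>x. c * sign_remainders d \<Phi> n f x)"
  unfolding sign_remainders_def by (auto simp: fun_eq_iff sign_spec_mult sign_spec_lconst mod_smult_left)

context
  fixes d :: nat and \<Phi> :: lpoly and n :: nat
  assumes \<Phi>: "\<Phi> \<in> ring_d d"
    and zdz_vanishes: "\<And>B i. B \<subseteq> {..<d} \<Longrightarrow> i < d \<Longrightarrow> sign_spec d B (zdz i \<Phi>) = 0"
    and degree_ge: "\<And>B. B \<subseteq> {..<d} \<Longrightarrow> n \<le> degree (sign_spec d B \<Phi>)"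
begin

lemma sign_remainders_crit_gens:
  assumes g: "g \<in> ring_d d" and j: "j \<le> d"
  shows "sign_remainders d \<Phi> n (g * crit_gens d \<Phi> j) = 0"
proof -
  have "sign_spec d B (g * crit_gens d \<Phi> j) mod sign_spec d B \<Phi> = 0" if B: "B \<subseteq> {..<d}" for B
  proof (cases "j = 0")
    case True
    then show ?thesis using g \<Phi> by (simp add: crit_gens_def sign_spec_mult)
  next
    case False
    then have "sign_spec d B (crit_gens d \<Phi> j) = 0" using j zdz_vanishes[OF B, of "j - 1"]
      by (simp add: crit_gens_def)
    then show ?thesis using g \<Phi> by (simp add: sign_spec_mult ring_d_crit_gens)
  qed
  then show ?thesis unfolding sign_remainders_def by (auto simp: fun_eq_iff sign_index_def)
qed

lemma sign_remainders_sign_test: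
  assumes "(B, k) \<in> sign_index d n"
  shows "sign_remainders d \<Phi> n (sign_test d B k) = (\<lambda>x. if x = (B, k) then 1 else 0)"
proof
  fix x show "sign_remainders d \<Phi> n (sign_test d B k) x = (if x = (B, k) then 1 else 0)"
  proof (cases x)
    case (Pair B' k')
    show ?thesis
    proof (cases "(B', k') \<in> sign_index d n")
      case True
      then have B: "B \<subseteq> {..<d}" "k < n" and B': "B' \<subseteq> {..<d}"
        using assms by (auto simp: sign_index_def)
      have "degree (monom (1::complex) k) < degree (sign_spec d B' \<Phi>)"
        using degree_ge[OF B'] B(2) by (simp add: degree_monom_eq)
      then have "sign_spec d B' (sign_test d B k) mod sign_spec d B' \<Phi> = (if B = B' then monom 1 k else 0)"
        by (simp add: sign_spec_sign_test[OF B(1) B'] mod_poly_less)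
      then show ?thesis using True Pair unfolding sign_remainders_def by auto
    qed (use assms Pair in \<open>auto simp: sign_remainders_def\<close>)
  qed
qed

text \<open>A spanning family of \<open>m\<close> elements modulo the critical ideal maps onto a family spanning all
  indicator functions of \<open>sign_index d n\<close>, since \<open>sign_remainders\<close> kills the critical ideal.\<close>
lemma crit_spanning_card_bound:
  assumes "crit_spanning d \<Phi> m"
  shows "card (sign_index d n) \<le> m"
proof -
  obtain b where b: "\<forall>k<m. b k \<in> ring_d d"
    and rep: "\<forall>f\<in>ring_d d. \<exists>(c::nat \<Rightarrow> complex) (g::nat \<Rightarrow> lpoly).
              (\<forall>j\<le>d. g j \<in> ring_d d) \<and>
              f = (\<Sum>k<m. lconst (c k) * b k) + (\<Sum>j\<le>d. g j * crit_gens d \<Phi> j)"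
    using assms unfolding crit_spanning_def by blast
  let ?R = "sign_remainders d \<Phi> n"
  let ?span = "fun_space.span ((\<lambda>k. ?R (b k)) ` {..<m})"
  let ?ind = "\<lambda>e x. if x = e then 1 else 0 :: complex"
  have "?ind e \<in> ?span" if e: "e \<in> sign_index d n" for e
  proof -
    obtain B k where e_eq: "e = (B, k)" by (cases e)
    obtain c g where g: "\<forall>j\<le>d. g j \<in> ring_d d"
      and f: "sign_test d B k = (\<Sum>k<m. lconst (c k) * b k) + (\<Sum>j\<le>d. g j * crit_gens d \<Phi> j)"
      using rep ring_d_sign_test by blast
    have "?ind e = ?R (sign_test d B k)" using sign_remainders_sign_test e e_eq by simp
    also have "\<dots> = (\<Sum>k<m. ?R (lconst (c k) * b k)) + (\<Sum>j\<le>d. ?R (g j * crit_gens d \<Phi> j))"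
      unfolding f sign_remainders_add sign_remainders_sum ..
    also have "\<dots> = (\<Sum>k<m. (\<lambda>x. c k * ?R (b k) x))"
      using b g by (simp add: sign_remainders_lconst_mult sign_remainders_crit_gens)
    also have "\<dots> \<in> ?span"
      by (intro fun_space.span_sum fun_space.span_scale fun_space.span_base) auto
    finally show ?thesis .
  qed
  then have "card (?ind ` sign_index d n) \<le> card ((\<lambda>k. ?R (b k)) ` {..<m})"
    using fun_space.independent_span_bound[OF _ fun_space_independent_indicators] by blast
  also have "\<dots> \<le> m" using card_image_le[of "{..<m}"] by simp
  moreover have "inj_on ?ind (sign_index d n)"
  proof (rule inj_onI)
    fix e e' :: "nat set \<times> nat" assume "?ind e = ?ind e'"
    from fun_cong[OF this, of e] show "e = e'" by (simp split: if_splits)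
  qed
  ultimately show ?thesis by (simp add: card_image)
qed

theorem crit_degree_lower_bound:
  assumes fin: "finite (crit_points d \<Phi>)"
  shows "2 ^ d * n \<le> crit_degree d \<Phi>"
proof -
  have "\<exists>m. crit_spanning d \<Phi> m"
    using \<Phi> fin by (intro ex_crit_spanning) (auto intro: ring_d_crit_gens)
  then have "crit_spanning d \<Phi> (LEAST m. crit_spanning d \<Phi> m)" by (rule LeastI_ex)
  then have "card (sign_index d n) \<le> (LEAST m. crit_spanning d \<Phi> m)"
    by (rule crit_spanning_card_bound)
  then show ?thesis by (simp add: card_sign_index crit_degree_eq_Least[OF fin])
qed

end

theorem corollary1p8:
  fixes d :: nat
    and act :: "(nat \<Rightarrow>\<^sub>0 int) \<Rightarrow> 'v \<Rightarrow> 'v"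
    and adj :: "'v \<Rightarrow> 'v \<Rightarrow> bool"
    and W :: "'v set"
    and e :: "'v \<Rightarrow> 'v \<Rightarrow> real"
    and V :: "'v \<Rightarrow> real"
  assumes "periodic_graph d act adj"
    and "fundamental_domain d act W"
    and "periodic_operator d act e V"
    and "finite (crit_points d (dispersion d act adj e V W))"
  shows "2 ^ d * card W \<le> crit_degree d (dispersion d act adj e V W)"
proof (cases "finite W")
  \<comment> \<open>Only the finiteness of \<open>W\<close> matters (and \<open>card W = 0\<close> otherwise), not that it is a
    fundamental domain.\<close>
  case True
  have "zinv d (dispersion d act adj e V W) = dispersion d act adj e V W"
    by (rule zinv_dispersion[OF assms(1,3) True])
  then show ?thesis
    using assms(4) coeff_sign_spec_dispersion[OF True]
    by (intro crit_degree_lower_bound ring_d_dispersion sign_spec_zdz_eq_0 le_degree) auto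
qed simp

end
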